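(* Let $I$ be a finite category with a degree function $|\cdot|:\mathrm{Ob}(I)\to\{0,1\}$ such that $|i|<|j|$ for every non-identity morphism $u:i\to j$, and let $\mathcal{C}:I\to\mathsf{Cat}$ be a functor such that each $\mathcal{C}_i=\mathcal{C}(i)$ is a P-category $(\mathcal{C}_i,P,\mathcal{F}_i,\mathcal{W}_i)$ and each $u_*=\mathcal{C}(u):\mathcal{C}_i\to\mathcal{C}_j$ preserves path objects, fibrations, weak equivalences and fibre products. Then the diagram category $\Gamma\mathcal{C}$ is a P-category with path objects, fibrations, weak equivalences and fibre products defined level-wise.
   Context: $\Gamma\mathcal{C}$: objects are families $A_i\in\mathcal{C}_i$ ($i\in I$) with comparison morphisms $\varphi_u:u_*(A_i)\to A_j$ for $u:i\to j$; morphisms $f:A\to B$ are families $f_i:A_i\to B_i$ with $f_j\varphi_u=\varphi_uu_*(f_i)$. Level-wise path: $P(A)=(P(A_i),P(\varphi_u))$ with level-wise $\iota$, $\delta^k$ (and level-wise symmetry, coproduct, interchange, folding map). P-category: a category with finite products and final object $e$, a functorial path $P$ ($\iota:1\to P$, $\delta^0,\delta^1:P\to1$, $\delta^k\iota=1$) equipped with natural transformations $\tau:P\to P$, $c:P\to P^2$, $\mu:P^2\to P^2$, $\nabla:P^2\to P$ with $\tau\tau=1,\tau\iota=\iota,\delta^k\tau=\delta^{1-k}$; $c_{P(A)}c_A=P(c_A)c_A$, $\delta^1_{P(A)}c_A=P(\delta^1_A)c_A=1$, $c_A\iota_A=\iota_{P(A)}\iota_A$, $\delta^0_{P(A)}c_A=P(\delta^0_A)c_A=\iota_A\delta^0_A$;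 $\mu$ invertible, $\delta^k_{P(A)}\mu_A=P(\delta^k_A)$, $P(\delta^k_A)\mu_A=\delta^k_{P(A)}$; $\delta^k\nabla=\delta^k\delta^k_P$, $\nabla\iota_P=1$; and classes $\mathcal{F}$ (fibrations), $\mathcal{W}$ (weak equivalences) with: (P$_1$) both contain isomorphisms, closed under composition, $\mathcal{W}$ 2-out-of-3, $A\to e$ fibrations; (P$_2$) $\iota_A\in\mathcal{W}$, $(\delta^0,\delta^1):P(A)\to A\times A$ fibration, $\delta^k$ trivial fibrations; (P$_3$) for $u:A\to C$ and a fibration $v:B\to C$, $A\times_CB$ exists, $\pi_1$ is a fibration, trivial if $v$ is, and $\pi_2$ is a weak equivalence if $u$ is; (P$_4$) $P$ preserves fibrations, weak equivalences and fibre products; (P$_5$) for each fibration $v:A\to B$, $((\delta^0_A,\delta^1_A),P(v)):P(A)\to(A\times A)\times_{B\times B}P(B)$ is a fibration. *)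

theory Defs
  imports Main
begin

text \<open>A category with objects of type 'o and morphisms of type 'm.
  Comp C g f is the composite g after f.\<close>

record ('o,'m) cat =
  Obj  :: "'o set"
  Arr  :: "'m set"
  Dom  :: "'m \<Rightarrow> 'o"
  Cod  :: "'m \<Rightarrow> 'o"
  Idm  :: "'o \<Rightarrow> 'm"
  Comp :: "'m \<Rightarrow> 'm \<Rightarrow> 'm"

definition hom :: "('o,'m) cat \<Rightarrow> 'o \<Rightarrow> 'o \<Rightarrow> 'm set" where
  "hom C A B = {f \<in> Arr C. Dom C f = A \<and> Cod C f = B}"

definition is_category :: "('o,'m) cat \<Rightarrow> bool" where
  "is_category C \<longleftrightarrow>
     (\<forall>f\<in>Arr C. Dom C f \<in> Obj C \<and> Cod C f \<in> Obj C) \<and>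
     (\<forall>A\<in>Obj C. Idm C A \<in> hom C A A) \<and>
     (\<forall>f g. f \<in> Arr C \<and> g \<in> Arr C \<and> Cod C f = Dom C g \<longrightarrow>
        Comp C g f \<in> hom C (Dom C f) (Cod C g)) \<and>
     (\<forall>f\<in>Arr C. Comp C f (Idm C (Dom C f)) = f \<and> Comp C (Idm C (Cod C f)) f = f) \<and>
     (\<forall>f g h. f \<in> Arr C \<and> g \<in> Arr C \<and> h \<in> Arr C \<and> Cod C f = Dom C g \<and> Cod C g = Dom C h \<longrightarrow>
        Comp C h (Comp C g f) = Comp C (Comp C h g) f)"

definition is_functor ::
  "('o,'m) cat \<Rightarrow> ('p,'n) cat \<Rightarrow> ('o \<Rightarrow> 'p) \<Rightarrow> ('m \<Rightarrow> 'n) \<Rightarrow> bool" where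
  "is_functor C D Fo Fm \<longleftrightarrow>
     (\<forall>A\<in>Obj C. Fo A \<in> Obj D) \<and>
     (\<forall>f\<in>Arr C. Fm f \<in> hom D (Fo (Dom C f)) (Fo (Cod C f))) \<and>
     (\<forall>A\<in>Obj C. Fm (Idm C A) = Idm D (Fo A)) \<and>
     (\<forall>f g. f \<in> Arr C \<and> g \<in> Arr C \<and> Cod C f = Dom C g \<longrightarrow>
        Fm (Comp C g f) = Comp D (Fm g) (Fm f))"

definition nat_trans ::
  "('o,'m) cat \<Rightarrow> ('o \<Rightarrow> 'o) \<Rightarrow> ('m \<Rightarrow> 'm) \<Rightarrow> ('o \<Rightarrow> 'o) \<Rightarrow> ('m \<Rightarrow> 'm) \<Rightarrow> ('o \<Rightarrow> 'm) \<Rightarrow> bool" where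
  "nat_trans C Fo Fm Go Gm eta \<longleftrightarrow>
     (\<forall>A\<in>Obj C. eta A \<in> hom C (Fo A) (Go A)) \<and>
     (\<forall>f\<in>Arr C. Comp C (Gm f) (eta (Dom C f)) = Comp C (eta (Cod C f)) (Fm f))"

definition is_iso :: "('o,'m) cat \<Rightarrow> 'm \<Rightarrow> bool" where
  "is_iso C f \<longleftrightarrow> f \<in> Arr C \<and>
     (\<exists>g\<in>hom C (Cod C f) (Dom C f). Comp C g f = Idm C (Dom C f) \<and> Comp C f g = Idm C (Cod C f))"

definition is_terminal :: "('o,'m) cat \<Rightarrow> 'o \<Rightarrow> bool" where
  "is_terminal C e \<longleftrightarrow> e \<in> Obj C \<and> (\<forall>A\<in>Obj C. \<exists>!t. t \<in> hom C A e)"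

definition is_product :: "('o,'m) cat \<Rightarrow> 'o \<Rightarrow> 'o \<Rightarrow> 'o \<Rightarrow> 'm \<Rightarrow> 'm \<Rightarrow> bool" where
  "is_product C A B X p1 p2 \<longleftrightarrow> X \<in> Obj C \<and> p1 \<in> hom C X A \<and> p2 \<in> hom C X B \<and>
     (\<forall>Z\<in>Obj C. \<forall>f\<in>hom C Z A. \<forall>g\<in>hom C Z B.
        \<exists>!h. h \<in> hom C Z X \<and> Comp C p1 h = f \<and> Comp C p2 h = g)"

definition has_finite_products :: "('o,'m) cat \<Rightarrow> bool" where
  "has_finite_products C \<longleftrightarrow> (\<exists>e. is_terminal C e) \<and>
     (\<forall>A\<in>Obj C. \<forall>B\<in>Obj C. \<exists>X p1 p2. is_product C A B X p1 p2)"

definition is_pullback :: "('o,'m) cat \<Rightarrow> 'm \<Rightarrow> 'm \<Rightarrow> 'o \<Rightarrow> 'm \<Rightarrow> 'm \<Rightarrow> bool" where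
  "is_pullback C u v Q q1 q2 \<longleftrightarrow>
     u \<in> Arr C \<and> v \<in> Arr C \<and> Cod C u = Cod C v \<and> Q \<in> Obj C \<and>
     q1 \<in> hom C Q (Dom C u) \<and> q2 \<in> hom C Q (Dom C v) \<and> Comp C u q1 = Comp C v q2 \<and>
     (\<forall>Z\<in>Obj C. \<forall>f\<in>hom C Z (Dom C u). \<forall>g\<in>hom C Z (Dom C v).
        Comp C u f = Comp C v g \<longrightarrow>
        (\<exists>!h. h \<in> hom C Z Q \<and> Comp C q1 h = f \<and> Comp C q2 h = g))"

record ('o,'m) pstruct =
  PO    :: "'o \<Rightarrow> 'o"
  PM    :: "'m \<Rightarrow> 'm"
  iota  :: "'o \<Rightarrow> 'm"
  dl0   :: "'o \<Rightarrow> 'm"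
  dl1   :: "'o \<Rightarrow> 'm"
  tau   :: "'o \<Rightarrow> 'm"
  cc    :: "'o \<Rightarrow> 'm"
  mu    :: "'o \<Rightarrow> 'm"
  nabla :: "'o \<Rightarrow> 'm"
  Fib   :: "'m set"
  WE    :: "'m set"

definition is_Pcat :: "('o,'m) cat \<Rightarrow> ('o,'m) pstruct \<Rightarrow> bool" where
  "is_Pcat C S \<longleftrightarrow>
   (let P = PO S; Pm = PM S; cmp = Comp C; one = Idm C;
        P2 = (\<lambda>A. P (P A)); Pm2 = (\<lambda>f. Pm (Pm f)) in
     is_category C \<and> has_finite_products C \<and> is_functor C C P Pm \<and>
     \<comment> \<open>path structure\<close>
     nat_trans C id id P Pm (iota S) \<and>
     nat_trans C P Pm id id (dl0 S) \<and> nat_trans C P Pm id id (dl1 S) \<and>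
     (\<forall>A\<in>Obj C. cmp (dl0 S A) (iota S A) = one A \<and> cmp (dl1 S A) (iota S A) = one A) \<and>
     \<comment> \<open>symmetry tau\<close>
     nat_trans C P Pm P Pm (tau S) \<and>
     (\<forall>A\<in>Obj C. cmp (tau S A) (tau S A) = one (P A) \<and> cmp (tau S A) (iota S A) = iota S A \<and>
        cmp (dl0 S A) (tau S A) = dl1 S A \<and> cmp (dl1 S A) (tau S A) = dl0 S A) \<and>
     \<comment> \<open>coproduct c\<close>
     nat_trans C P Pm P2 Pm2 (cc S) \<and>
     (\<forall>A\<in>Obj C.
        cmp (cc S (P A)) (cc S A) = cmp (Pm (cc S A)) (cc S A) \<and>
        cmp (dl1 S (P A)) (cc S A) = one (P A) \<and> cmp (Pm (dl1 S A)) (cc S A) = one (P A) \<and>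
        cmp (cc S A) (iota S A) = cmp (iota S (P A)) (iota S A) \<and>
        cmp (dl0 S (P A)) (cc S A) = cmp (iota S A) (dl0 S A) \<and>
        cmp (Pm (dl0 S A)) (cc S A) = cmp (iota S A) (dl0 S A)) \<and>
     \<comment> \<open>interchange mu\<close>
     nat_trans C P2 Pm2 P2 Pm2 (mu S) \<and>
     (\<forall>A\<in>Obj C. is_iso C (mu S A) \<and>
        cmp (dl0 S (P A)) (mu S A) = Pm (dl0 S A) \<and> cmp (dl1 S (P A)) (mu S A) = Pm (dl1 S A) \<and>
        cmp (Pm (dl0 S A)) (mu S A) = dl0 S (P A) \<and> cmp (Pm (dl1 S A)) (mu S A) = dl1 S (P A)) \<and>
     \<comment> \<open>folding map nabla\<close>
     nat_trans C P2 Pm2 P Pm (nabla S) \<and>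
     (\<forall>A\<in>Obj C.
        cmp (dl0 S A) (nabla S A) = cmp (dl0 S A) (dl0 S (P A)) \<and>
        cmp (dl1 S A) (nabla S A) = cmp (dl1 S A) (dl1 S (P A)) \<and>
        cmp (nabla S A) (iota S (P A)) = one (P A)) \<and>
     \<comment> \<open>(P1)\<close>
     Fib S \<subseteq> Arr C \<and> WE S \<subseteq> Arr C \<and>
     (\<forall>f. is_iso C f \<longrightarrow> f \<in> Fib S \<and> f \<in> WE S) \<and>
     (\<forall>f g. f \<in> Fib S \<and> g \<in> Fib S \<and> Cod C f = Dom C g \<longrightarrow> cmp g f \<in> Fib S) \<and>
     (\<forall>f g. f \<in> WE S \<and> g \<in> WE S \<and> Cod C f = Dom C g \<longrightarrow> cmp g f \<in> WE S) \<and>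
     (\<forall>f g. f \<in> Arr C \<and> g \<in> Arr C \<and> Cod C f = Dom C g \<longrightarrow>
        (f \<in> WE S \<and> cmp g f \<in> WE S \<longrightarrow> g \<in> WE S) \<and>
        (g \<in> WE S \<and> cmp g f \<in> WE S \<longrightarrow> f \<in> WE S)) \<and>
     (\<forall>e. is_terminal C e \<longrightarrow> (\<forall>A\<in>Obj C. \<forall>t\<in>hom C A e. t \<in> Fib S)) \<and>
     \<comment> \<open>(P2)\<close>
     (\<forall>A\<in>Obj C. iota S A \<in> WE S \<and>
        dl0 S A \<in> Fib S \<and> dl0 S A \<in> WE S \<and> dl1 S A \<in> Fib S \<and> dl1 S A \<in> WE S \<and>
        (\<forall>X p1 p2. is_product C A A X p1 p2 \<longrightarrow>
           (\<forall>h\<in>hom C (P A) X. cmp p1 h = dl0 S A \<and> cmp p2 h = dl1 S A \<longrightarrow> h \<in> Fib S))) \<and>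
     \<comment> \<open>(P3)\<close>
     (\<forall>u v. u \<in> Arr C \<and> v \<in> Fib S \<and> Cod C u = Cod C v \<longrightarrow>
        (\<exists>Q q1 q2. is_pullback C u v Q q1 q2) \<and>
        (\<forall>Q q1 q2. is_pullback C u v Q q1 q2 \<longrightarrow>
           q1 \<in> Fib S \<and> (v \<in> WE S \<longrightarrow> q1 \<in> WE S) \<and> (u \<in> WE S \<longrightarrow> q2 \<in> WE S))) \<and>
     \<comment> \<open>(P4)\<close>
     (\<forall>f\<in>Fib S. Pm f \<in> Fib S) \<and> (\<forall>f\<in>WE S. Pm f \<in> WE S) \<and>
     (\<forall>u v Q q1 q2. v \<in> Fib S \<and> is_pullback C u v Q q1 q2 \<longrightarrow>
        is_pullback C (Pm u) (Pm v) (P Q) (Pm q1) (Pm q2)) \<and>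
     \<comment> \<open>(P5)\<close>
     (\<forall>v\<in>Fib S. \<forall>AA a1 a2 BB b1 b2 w h Q q1 q2 k.
        is_product C (Dom C v) (Dom C v) AA a1 a2 \<and>
        is_product C (Cod C v) (Cod C v) BB b1 b2 \<and>
        w \<in> hom C AA BB \<and> cmp b1 w = cmp v a1 \<and> cmp b2 w = cmp v a2 \<and>
        h \<in> hom C (P (Cod C v)) BB \<and> cmp b1 h = dl0 S (Cod C v) \<and> cmp b2 h = dl1 S (Cod C v) \<and>
        is_pullback C w h Q q1 q2 \<and>
        k \<in> hom C (P (Dom C v)) Q \<and>
        cmp a1 (cmp q1 k) = dl0 S (Dom C v) \<and> cmp a2 (cmp q1 k) = dl1 S (Dom C v) \<and>
        cmp q2 k = Pm v
        \<longrightarrow> k \<in> Fib S))"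

definition preserves_paths ::
  "('o,'m) cat \<Rightarrow> ('o,'m) pstruct \<Rightarrow> ('o,'m) pstruct \<Rightarrow> ('o \<Rightarrow> 'o) \<Rightarrow> ('m \<Rightarrow> 'm) \<Rightarrow> bool" where
  "preserves_paths C S T Fo Fm \<longleftrightarrow>
     (\<forall>A\<in>Obj C. Fo (PO S A) = PO T (Fo A) \<and>
        Fm (iota S A) = iota T (Fo A) \<and> Fm (dl0 S A) = dl0 T (Fo A) \<and> Fm (dl1 S A) = dl1 T (Fo A) \<and>
        Fm (tau S A) = tau T (Fo A) \<and> Fm (cc S A) = cc T (Fo A) \<and>
        Fm (mu S A) = mu T (Fo A) \<and> Fm (nabla S A) = nabla T (Fo A)) \<and>
     (\<forall>f\<in>Arr C. Fm (PM S f) = PM T (Fm f))"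

definition preserves_fib_we ::
  "('o,'m) pstruct \<Rightarrow> ('o,'m) pstruct \<Rightarrow> ('m \<Rightarrow> 'm) \<Rightarrow> bool" where
  "preserves_fib_we S T Fm \<longleftrightarrow> (\<forall>f\<in>Fib S. Fm f \<in> Fib T) \<and> (\<forall>f\<in>WE S. Fm f \<in> WE T)"

text \<open>Preservation of the fibre products of axiom (P3), i.e. pullbacks along fibrations.\<close>
definition preserves_fibre_products ::
  "('o,'m) cat \<Rightarrow> ('o,'m) pstruct \<Rightarrow> ('o,'m) cat \<Rightarrow> ('o \<Rightarrow> 'o) \<Rightarrow> ('m \<Rightarrow> 'm) \<Rightarrow> bool" where
  "preserves_fibre_products C S D Fo Fm \<longleftrightarrow>
     (\<forall>u v Q q1 q2. v \<in> Fib S \<and> is_pullback C u v Q q1 q2 \<longrightarrow>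
        is_pullback D (Fm u) (Fm v) (Fo Q) (Fm q1) (Fm q2))"

type_synonym ('i,'u,'o,'m) gobj = "('i \<Rightarrow> 'o) \<times> ('u \<Rightarrow> 'm)"
type_synonym ('i,'u,'o,'m) gmor = "('i,'u,'o,'m) gobj \<times> ('i,'u,'o,'m) gobj \<times> ('i \<Rightarrow> 'm)"

definition lw :: "'a set \<Rightarrow> ('a \<Rightarrow> 'b) \<Rightarrow> 'a \<Rightarrow> 'b" where
  "lw X f = (\<lambda>x. if x \<in> X then f x else undefined)"

text \<open>Objects: families A_i with comparison maps phi_u : u_*(A_i) -> A_j (u : i -> j);
  extensional outside Ob(I), Mor(I).\<close>
definition Gamma_obj ::
  "('i,'u) cat \<Rightarrow> ('i \<Rightarrow> ('o,'m) cat) \<Rightarrow> ('u \<Rightarrow> 'o \<Rightarrow> 'o) \<Rightarrow> ('i,'u,'o,'m) gobj set" where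
  "Gamma_obj I C Fo = {(A, phi).
      (\<forall>i\<in>Obj I. A i \<in> Obj (C i)) \<and> (\<forall>i. i \<notin> Obj I \<longrightarrow> A i = undefined) \<and>
      (\<forall>u\<in>Arr I. phi u \<in> hom (C (Cod I u)) (Fo u (A (Dom I u))) (A (Cod I u))) \<and>
      (\<forall>u. u \<notin> Arr I \<longrightarrow> phi u = undefined)}"

definition Gamma_arr ::
  "('i,'u) cat \<Rightarrow> ('i \<Rightarrow> ('o,'m) cat) \<Rightarrow> ('u \<Rightarrow> 'o \<Rightarrow> 'o) \<Rightarrow> ('u \<Rightarrow> 'm \<Rightarrow> 'm)
     \<Rightarrow> ('i,'u,'o,'m) gmor set" where
  "Gamma_arr I C Fo Fm = {(X, Y, f).
      X \<in> Gamma_obj I C Fo \<and> Y \<in> Gamma_obj I C Fo \<and>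
      (\<forall>i\<in>Obj I. f i \<in> hom (C i) (fst X i) (fst Y i)) \<and>
      (\<forall>i. i \<notin> Obj I \<longrightarrow> f i = undefined) \<and>
      (\<forall>u\<in>Arr I. Comp (C (Cod I u)) (f (Cod I u)) (snd X u) =
                  Comp (C (Cod I u)) (snd Y u) (Fm u (f (Dom I u))))}"

definition Gamma ::
  "('i,'u) cat \<Rightarrow> ('i \<Rightarrow> ('o,'m) cat) \<Rightarrow> ('u \<Rightarrow> 'o \<Rightarrow> 'o) \<Rightarrow> ('u \<Rightarrow> 'm \<Rightarrow> 'm)
     \<Rightarrow> (('i,'u,'o,'m) gobj, ('i,'u,'o,'m) gmor) cat" where
  "Gamma I C Fo Fm =
     \<lparr> Obj = Gamma_obj I C Fo,
       Arr = Gamma_arr I C Fo Fm,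
       Dom = (\<lambda>(X, Y, f). X),
       Cod = (\<lambda>(X, Y, f). Y),
       Idm = (\<lambda>X. (X, X, lw (Obj I) (\<lambda>i. Idm (C i) (fst X i)))),
       Comp = (\<lambda>(Y', Z, g) (X, Y, f). (X, Z, lw (Obj I) (\<lambda>i. Comp (C i) (g i) (f i)))) \<rparr>"

definition gP_obj ::
  "('i,'u) cat \<Rightarrow> ('i \<Rightarrow> ('o,'m) pstruct) \<Rightarrow> ('i,'u,'o,'m) gobj \<Rightarrow> ('i,'u,'o,'m) gobj" where
  "gP_obj I S X = (lw (Obj I) (\<lambda>i. PO (S i) (fst X i)),
                   lw (Arr I) (\<lambda>u. PM (S (Cod I u)) (snd X u)))"

definition Gamma_P ::
  "('i,'u) cat \<Rightarrow> ('i \<Rightarrow> ('o,'m) cat) \<Rightarrow> ('u \<Rightarrow> 'o \<Rightarrow> 'o) \<Rightarrow> ('u \<Rightarrow> 'm \<Rightarrow> 'm)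
     \<Rightarrow> ('i \<Rightarrow> ('o,'m) pstruct) \<Rightarrow> (('i,'u,'o,'m) gobj, ('i,'u,'o,'m) gmor) pstruct" where
  "Gamma_P I C Fo Fm S =
    (let P = gP_obj I S in
     \<lparr> PO = P,
       PM = (\<lambda>(X, Y, f). (P X, P Y, lw (Obj I) (\<lambda>i. PM (S i) (f i)))),
       iota = (\<lambda>X. (X, P X, lw (Obj I) (\<lambda>i. iota (S i) (fst X i)))),
       dl0 = (\<lambda>X. (P X, X, lw (Obj I) (\<lambda>i. dl0 (S i) (fst X i)))),
       dl1 = (\<lambda>X. (P X, X, lw (Obj I) (\<lambda>i. dl1 (S i) (fst X i)))),
       tau = (\<lambda>X. (P X, P X, lw (Obj I) (\<lambda>i. tau (S i) (fst X i)))),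
       cc = (\<lambda>X. (P X, P (P X), lw (Obj I) (\<lambda>i. cc (S i) (fst X i)))),
       mu = (\<lambda>X. (P (P X), P (P X), lw (Obj I) (\<lambda>i. mu (S i) (fst X i)))),
       nabla = (\<lambda>X. (P (P X), P X, lw (Obj I) (\<lambda>i. nabla (S i) (fst X i)))),
       Fib = {F \<in> Gamma_arr I C Fo Fm. \<forall>i\<in>Obj I. snd (snd F) i \<in> Fib (S i)},
       WE = {F \<in> Gamma_arr I C Fo Fm. \<forall>i\<in>Obj I. snd (snd F) i \<in> WE (S i)} \<rparr>)"

end

theory Submission
  imports Defs
begin

text \<open>All structure of \<open>\<Gamma>C\<close> is level-wise, so the only real work concerns the limits occurring
  in the axioms: the terminal object, binary products and pullbacks along fibrations. These are
  computed level-wise: at each index \<open>i\<close> one takes the limit in \<open>C\<^sub>i\<close>, and the comparison maps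
  \<open>u\<^sub>*(X\<^sub>i) \<rightarrow> X\<^sub>j\<close> are induced by the universal property at \<open>j\<close>. Every limit in \<open>\<Gamma>C\<close> is
  isomorphic to this one, hence a level-wise limit, and isomorphisms in \<open>\<Gamma>C\<close> are level-wise
  isomorphisms. Each axiom of a P-category for \<open>\<Gamma>C\<close> thereby reduces to the same axiom in every
  \<open>C\<^sub>i\<close>.\<close>

lemma in_hom_iff: "f \<in> hom C A B \<longleftrightarrow> f \<in> Arr C \<and> Dom C f = A \<and> Cod C f = B"
  by (simp add: hom_def)

lemma lw_apply [simp]: "x \<in> X \<Longrightarrow> lw X f x = f x"
  by (simp add: lw_def)

lemma lw_outside [simp]: "x \<notin> X \<Longrightarrow> lw X f x = undefined"
  by (simp add: lw_def)

lemma lw_cong: "(\<And>x. x \<in> X \<Longrightarrow> f x = g x) \<Longrightarrow> lw X f = lw X g"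
  by (auto simp: lw_def)

lemma lw_cong_simp [cong]:
  "X = Y \<Longrightarrow> (\<And>x. x \<in> Y =simp=> f x = g x) \<Longrightarrow> lw X f = lw Y g"
  by (auto simp: lw_def simp_implies_def)

lemma lw_eqI: "(\<And>x. x \<in> X \<Longrightarrow> f x = h x) \<Longrightarrow> (\<And>x. x \<notin> X \<Longrightarrow> h x = undefined) \<Longrightarrow> lw X f = h"
  by (auto simp: lw_def)

lemma lw_eq_iff: "lw X f = lw X g \<longleftrightarrow> (\<forall>x\<in>X. f x = g x)"
  by (metis lw_apply lw_cong)

lemma lw_eqD: "lw X f = h \<Longrightarrow> x \<in> X \<Longrightarrow> f x = h x"
  by (metis lw_apply)

locale category =
  fixes C :: "('o,'m) cat"
  assumes is_category: "is_category C"
begin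

lemma dom_obj: "f \<in> Arr C \<Longrightarrow> Dom C f \<in> Obj C"
  and cod_obj: "f \<in> Arr C \<Longrightarrow> Cod C f \<in> Obj C"
  using is_category by (simp_all add: is_category_def)

lemma hom_dom: "f \<in> hom C A B \<Longrightarrow> A \<in> Obj C"
  and hom_cod: "f \<in> hom C A B \<Longrightarrow> B \<in> Obj C"
  using dom_obj cod_obj by (auto simp: in_hom_iff)

lemma id_hom: "A \<in> Obj C \<Longrightarrow> Idm C A \<in> hom C A A"
  using is_category by (simp add: is_category_def)

lemma comp_hom: "f \<in> hom C A B \<Longrightarrow> g \<in> hom C B D \<Longrightarrow> Comp C g f \<in> hom C A D"
  using is_category unfolding is_category_def in_hom_iff by metis

lemma comp_id: "f \<in> hom C A B \<Longrightarrow> Comp C f (Idm C A) = f"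
  and id_comp: "f \<in> hom C A B \<Longrightarrow> Comp C (Idm C B) f = f"
  using is_category unfolding is_category_def in_hom_iff by metis+

lemma comp_assoc: "f \<in> hom C A B \<Longrightarrow> g \<in> hom C B D \<Longrightarrow> h \<in> hom C D E \<Longrightarrow>
    Comp C h (Comp C g f) = Comp C (Comp C h g) f"
  using is_category unfolding is_category_def in_hom_iff by metis

lemma terminal_unique: "is_terminal C e \<Longrightarrow> f \<in> hom C Z e \<Longrightarrow> g \<in> hom C Z e \<Longrightarrow> f = g"
  unfolding is_terminal_def using hom_dom by metis

lemma terminal_retract:
  assumes e': "is_terminal C e'" and e: "e \<in> Obj C"
    and h: "h \<in> hom C e' e" and h': "h' \<in> hom C e e'" and hh': "Comp C h h' = Idm C e"
  shows "is_terminal C e"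
proof -
  have "\<exists>!t. t \<in> hom C Z e" if Z: "Z \<in> Obj C" for Z
  proof -
    obtain m where m: "m \<in> hom C Z e'" using e' Z unfolding is_terminal_def by blast
    show ?thesis
    proof
      show "Comp C h m \<in> hom C Z e" using comp_hom[OF m h] .
      fix k assume k: "k \<in> hom C Z e"
      have "Comp C h' k = m" using terminal_unique[OF e' comp_hom[OF k h'] m] .
      hence "Comp C h m = Comp C (Comp C h h') k" using comp_assoc[OF k h' h] by simp
      thus "k = Comp C h m" using hh' id_comp[OF k] by simp
    qed
  qed
  thus ?thesis using e unfolding is_terminal_def by blast
qed

end

section \<open>Universal spans\<close>

text \<open>Products and pullbacks are spans that are universal among the spans satisfying a relation
  (none for products, commutation of the square for pullbacks), so both are handled at once.\<close>

definition universal_span :: "('o,'m) cat \<Rightarrow> ('m \<Rightarrow> 'm \<Rightarrow> bool) \<Rightarrow> 'o \<Rightarrow> 'm \<Rightarrow> 'm \<Rightarrow> bool" where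
  "universal_span C R X p1 p2 \<longleftrightarrow>
     (\<forall>Z\<in>Obj C. \<forall>f\<in>hom C Z (Cod C p1). \<forall>g\<in>hom C Z (Cod C p2).
        R f g \<longrightarrow> (\<exists>!h. h \<in> hom C Z X \<and> Comp C p1 h = f \<and> Comp C p2 h = g))"

definition limit_span ::
  "('o,'m) cat \<Rightarrow> ('m \<Rightarrow> 'm \<Rightarrow> bool) \<Rightarrow> 'o \<Rightarrow> 'o \<Rightarrow> 'o \<Rightarrow> 'm \<Rightarrow> 'm \<Rightarrow> bool" where
  "limit_span C R A B X p1 p2 \<longleftrightarrow>
     X \<in> Obj C \<and> p1 \<in> hom C X A \<and> p2 \<in> hom C X B \<and> R p1 p2 \<and> universal_span C R X p1 p2"

lemma is_product_iff_limit_span: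
  "is_product C A B X p1 p2 \<longleftrightarrow> limit_span C (\<lambda>_ _. True) A B X p1 p2"
  unfolding is_product_def limit_span_def universal_span_def
  by (rule iffI; clarify; simp add: in_hom_iff[of p1] in_hom_iff[of p2])

lemma is_pullback_iff_limit_span:
  "is_pullback C u v Q q1 q2 \<longleftrightarrow> u \<in> Arr C \<and> v \<in> Arr C \<and> Cod C u = Cod C v \<and>
     limit_span C (\<lambda>f g. Comp C u f = Comp C v g) (Dom C u) (Dom C v) Q q1 q2"
  unfolding is_pullback_def limit_span_def universal_span_def
  by (rule iffI; clarify; simp add: in_hom_iff[of q1] in_hom_iff[of q2])

context category
begin

lemma universal_span_ex1:
  assumes "universal_span C R X p1 p2" "p1 \<in> hom C X A" "p2 \<in> hom C X B"
    "Z \<in> Obj C" "f \<in> hom C Z A" "g \<in> hom C Z B" "R f g"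
  shows "\<exists>!h. h \<in> hom C Z X \<and> Comp C p1 h = f \<and> Comp C p2 h = g"
proof -
  have "Cod C p1 = A" "Cod C p2 = B" using assms(2,3) by (simp_all add: in_hom_iff)
  thus ?thesis using assms(1,4-7) unfolding universal_span_def by blast
qed

lemma universal_spanE:
  assumes "universal_span C R X p1 p2" "p1 \<in> hom C X A" "p2 \<in> hom C X B"
    "Z \<in> Obj C" "f \<in> hom C Z A" "g \<in> hom C Z B" "R f g"
  obtains h where "h \<in> hom C Z X" "Comp C p1 h = f" "Comp C p2 h = g"
    "\<And>h'. h' \<in> hom C Z X \<Longrightarrow> Comp C p1 h' = f \<Longrightarrow> Comp C p2 h' = g \<Longrightarrow> h' = h"
  using universal_span_ex1[OF assms] that by blast

lemma universal_span_unique: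
  assumes U: "universal_span C R X p1 p2" "p1 \<in> hom C X A" "p2 \<in> hom C X B"
    and h: "h \<in> hom C Z X" and h': "h' \<in> hom C Z X"
    and "Comp C p1 h = Comp C p1 h'" "Comp C p2 h = Comp C p2 h'"
    and "R (Comp C p1 h) (Comp C p2 h)"
  shows "h = h'"
proof -
  obtain k where "\<And>k'. k' \<in> hom C Z X \<Longrightarrow> Comp C p1 k' = Comp C p1 h \<Longrightarrow>
      Comp C p2 k' = Comp C p2 h \<Longrightarrow> k' = k"
    using universal_spanE[OF U hom_dom[OF h] comp_hom[OF h U(2)] comp_hom[OF h U(3)] assms(8)] by blast
  from this[OF h] this[OF h'] show ?thesis using assms(6,7) by simp
qed

lemma universal_span_retract:
  assumes U: "universal_span C R X' p1' p2'" "p1' \<in> hom C X' A" "p2' \<in> hom C X' B"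
    and X: "X \<in> Obj C" and p1: "p1 \<in> hom C X A" and p2: "p2 \<in> hom C X B"
    and h: "h \<in> hom C X' X" and h': "h' \<in> hom C X X'" and hh': "Comp C h h' = Idm C X"
    and e1: "Comp C p1 h = p1'" and e2: "Comp C p2 h = p2'"
  shows "universal_span C R X p1 p2"
  unfolding universal_span_def
proof (intro ballI impI)
  fix Z f g
  assume Z: "Z \<in> Obj C" and "f \<in> hom C Z (Cod C p1)" "g \<in> hom C Z (Cod C p2)" and R: "R f g"
  hence f: "f \<in> hom C Z A" and g: "g \<in> hom C Z B" using p1 p2 by (simp_all add: in_hom_iff)
  obtain m where m: "m \<in> hom C Z X'" "Comp C p1' m = f" "Comp C p2' m = g"
    and m_unique: "\<And>m'. m' \<in> hom C Z X' \<Longrightarrow> Comp C p1' m' = f \<Longrightarrow> Comp C p2' m' = g \<Longrightarrow> m' = m"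
    using universal_spanE[OF U Z f g R] by blast
  have legs_h': "Comp C p1' h' = p1" "Comp C p2' h' = p2"
    using comp_assoc[OF h' h p1] comp_assoc[OF h' h p2] hh' comp_id[OF p1] comp_id[OF p2] e1 e2
    by simp_all
  show "\<exists>!k. k \<in> hom C Z X \<and> Comp C p1 k = f \<and> Comp C p2 k = g"
  proof
    show "Comp C h m \<in> hom C Z X \<and> Comp C p1 (Comp C h m) = f \<and> Comp C p2 (Comp C h m) = g"
      using comp_hom[OF m(1) h] comp_assoc[OF m(1) h p1] comp_assoc[OF m(1) h p2] e1 e2 m by simp
    fix k assume k: "k \<in> hom C Z X \<and> Comp C p1 k = f \<and> Comp C p2 k = g"
    have "Comp C p1' (Comp C h' k) = f" "Comp C p2' (Comp C h' k) = g"
      using comp_assoc[OF _ h' U(2)] comp_assoc[OF _ h' U(3)] legs_h' k by metis+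
    hence "Comp C h' k = m" using m_unique comp_hom[OF _ h'] k by blast
    hence "Comp C h m = Comp C (Comp C h h') k" using comp_assoc[OF _ h' h] k by metis
    thus "k = Comp C h m" using hh' id_comp[of k Z X] k by simp
  qed
qed


lemma universal_span_comparison:
  assumes U: "universal_span C R X p1 p2" and p1: "p1 \<in> hom C X A" and p2: "p2 \<in> hom C X B"
    and R: "R p1 p2"
    and U': "universal_span C R X' q1 q2" and q1: "q1 \<in> hom C X' A" and q2: "q2 \<in> hom C X' B"
    and R': "R q1 q2"
  obtains h h' where "h \<in> hom C X' X" "h' \<in> hom C X X'" "Comp C h h' = Idm C X"
    "Comp C p1 h = q1" "Comp C p2 h = q2"
proof -
  have X: "X \<in> Obj C" and X': "X' \<in> Obj C" using hom_dom[OF p1] hom_dom[OF q1] .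
  obtain h where h: "h \<in> hom C X' X" "Comp C p1 h = q1" "Comp C p2 h = q2"
    by (rule universal_spanE[OF U p1 p2 X' q1 q2 R'])
  obtain h' where h': "h' \<in> hom C X X'" "Comp C q1 h' = p1" "Comp C q2 h' = p2"
    by (rule universal_spanE[OF U' q1 q2 X p1 p2 R])
  have "Comp C h h' = Idm C X"
  proof (rule universal_span_unique[OF U p1 p2 comp_hom[OF h'(1) h(1)] id_hom[OF X]])
    show "Comp C p1 (Comp C h h') = Comp C p1 (Idm C X)" "Comp C p2 (Comp C h h') = Comp C p2 (Idm C X)"
      using comp_assoc[OF h'(1) h(1) p1] comp_assoc[OF h'(1) h(1) p2] h h' comp_id[OF p1] comp_id[OF p2]
      by simp_all
    thus "R (Comp C p1 (Comp C h h')) (Comp C p2 (Comp C h h'))" using R comp_id[OF p1] comp_id[OF p2] by simp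
  qed
  thus ?thesis using that h h' by blast
qed
end

lemma functor_obj: "is_functor C D Fo Fm \<Longrightarrow> A \<in> Obj C \<Longrightarrow> Fo A \<in> Obj D"
  by (simp add: is_functor_def)

lemma functor_hom: "is_functor C D Fo Fm \<Longrightarrow> f \<in> hom C A B \<Longrightarrow> Fm f \<in> hom D (Fo A) (Fo B)"
  unfolding is_functor_def in_hom_iff by metis

lemma functor_comp: "is_functor C D Fo Fm \<Longrightarrow> f \<in> hom C A B \<Longrightarrow> g \<in> hom C B E \<Longrightarrow>
    Fm (Comp C g f) = Comp D (Fm g) (Fm f)"
  unfolding is_functor_def in_hom_iff by metis

lemma functor_id: "is_functor C D Fo Fm \<Longrightarrow> A \<in> Obj C \<Longrightarrow> Fm (Idm C A) = Idm D (Fo A)"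
  unfolding is_functor_def by metis

lemma nat_trans_hom: "nat_trans C F Fm G Gm \<eta> \<Longrightarrow> A \<in> Obj C \<Longrightarrow> \<eta> A \<in> hom C (F A) (G A)"
  unfolding nat_trans_def by metis

lemma nat_trans_naturality: "nat_trans C F Fm G Gm \<eta> \<Longrightarrow> f \<in> hom C A B \<Longrightarrow>
    Comp C (Gm f) (\<eta> A) = Comp C (\<eta> B) (Fm f)"
  unfolding nat_trans_def in_hom_iff by metis

lemma
  assumes "is_Pcat C S"
  shows Pcat_category: "is_category C"
    and Pcat_finite_products: "has_finite_products C"
    and Pcat_path_functor: "is_functor C C (PO S) (PM S)"
    and Pcat_iota_nat: "nat_trans C id id (PO S) (PM S) (iota S)"
    and Pcat_dl0_nat: "nat_trans C (PO S) (PM S) id id (dl0 S)"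
    and Pcat_dl1_nat: "nat_trans C (PO S) (PM S) id id (dl1 S)"
    and Pcat_iota_eqs: "\<forall>A\<in>Obj C. Comp C (dl0 S A) (iota S A) = Idm C A \<and>
        Comp C (dl1 S A) (iota S A) = Idm C A"
    and Pcat_tau_nat: "nat_trans C (PO S) (PM S) (PO S) (PM S) (tau S)"
    and Pcat_tau_eqs: "\<forall>A\<in>Obj C. Comp C (tau S A) (tau S A) = Idm C (PO S A) \<and>
        Comp C (tau S A) (iota S A) = iota S A \<and>
        Comp C (dl0 S A) (tau S A) = dl1 S A \<and> Comp C (dl1 S A) (tau S A) = dl0 S A"
    and Pcat_cc_nat: "nat_trans C (PO S) (PM S) (\<lambda>A. PO S (PO S A)) (\<lambda>f. PM S (PM S f)) (cc S)"
    and Pcat_cc_eqs: "\<forall>A\<in>Obj C.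
        Comp C (cc S (PO S A)) (cc S A) = Comp C (PM S (cc S A)) (cc S A) \<and>
        Comp C (dl1 S (PO S A)) (cc S A) = Idm C (PO S A) \<and>
        Comp C (PM S (dl1 S A)) (cc S A) = Idm C (PO S A) \<and>
        Comp C (cc S A) (iota S A) = Comp C (iota S (PO S A)) (iota S A) \<and>
        Comp C (dl0 S (PO S A)) (cc S A) = Comp C (iota S A) (dl0 S A) \<and>
        Comp C (PM S (dl0 S A)) (cc S A) = Comp C (iota S A) (dl0 S A)"
    and Pcat_mu_nat: "nat_trans C (\<lambda>A. PO S (PO S A)) (\<lambda>f. PM S (PM S f))
        (\<lambda>A. PO S (PO S A)) (\<lambda>f. PM S (PM S f)) (mu S)"
    and Pcat_mu_eqs: "\<forall>A\<in>Obj C. is_iso C (mu S A) \<and>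
        Comp C (dl0 S (PO S A)) (mu S A) = PM S (dl0 S A) \<and>
        Comp C (dl1 S (PO S A)) (mu S A) = PM S (dl1 S A) \<and>
        Comp C (PM S (dl0 S A)) (mu S A) = dl0 S (PO S A) \<and>
        Comp C (PM S (dl1 S A)) (mu S A) = dl1 S (PO S A)"
    and Pcat_nabla_nat: "nat_trans C (\<lambda>A. PO S (PO S A)) (\<lambda>f. PM S (PM S f)) (PO S) (PM S) (nabla S)"
    and Pcat_nabla_eqs: "\<forall>A\<in>Obj C.
        Comp C (dl0 S A) (nabla S A) = Comp C (dl0 S A) (dl0 S (PO S A)) \<and>
        Comp C (dl1 S A) (nabla S A) = Comp C (dl1 S A) (dl1 S (PO S A)) \<and>
        Comp C (nabla S A) (iota S (PO S A)) = Idm C (PO S A)"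
    and Pcat_iso: "\<forall>f. is_iso C f \<longrightarrow> f \<in> Fib S \<and> f \<in> WE S"
    and Pcat_fib_comp: "\<forall>f g. f \<in> Fib S \<and> g \<in> Fib S \<and> Cod C f = Dom C g \<longrightarrow> Comp C g f \<in> Fib S"
    and Pcat_we_comp: "\<forall>f g. f \<in> WE S \<and> g \<in> WE S \<and> Cod C f = Dom C g \<longrightarrow> Comp C g f \<in> WE S"
    and Pcat_we_2_of_3: "\<forall>f g. f \<in> Arr C \<and> g \<in> Arr C \<and> Cod C f = Dom C g \<longrightarrow>
        (f \<in> WE S \<and> Comp C g f \<in> WE S \<longrightarrow> g \<in> WE S) \<and>
        (g \<in> WE S \<and> Comp C g f \<in> WE S \<longrightarrow> f \<in> WE S)"
    and Pcat_terminal_fib: "\<forall>e. is_terminal C e \<longrightarrow> (\<forall>A\<in>Obj C. \<forall>t\<in>hom C A e. t \<in> Fib S)"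
    and Pcat_P2: "\<forall>A\<in>Obj C. iota S A \<in> WE S \<and>
        dl0 S A \<in> Fib S \<and> dl0 S A \<in> WE S \<and> dl1 S A \<in> Fib S \<and> dl1 S A \<in> WE S \<and>
        (\<forall>X p1 p2. is_product C A A X p1 p2 \<longrightarrow>
           (\<forall>h\<in>hom C (PO S A) X. Comp C p1 h = dl0 S A \<and> Comp C p2 h = dl1 S A \<longrightarrow> h \<in> Fib S))"
    and Pcat_P3: "\<forall>u v. u \<in> Arr C \<and> v \<in> Fib S \<and> Cod C u = Cod C v \<longrightarrow>
        (\<exists>Q q1 q2. is_pullback C u v Q q1 q2) \<and>
        (\<forall>Q q1 q2. is_pullback C u v Q q1 q2 \<longrightarrow>
           q1 \<in> Fib S \<and> (v \<in> WE S \<longrightarrow> q1 \<in> WE S) \<and> (u \<in> WE S \<longrightarrow> q2 \<in> WE S))"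
    and Pcat_P4_fib: "\<forall>f\<in>Fib S. PM S f \<in> Fib S"
    and Pcat_P4_we: "\<forall>f\<in>WE S. PM S f \<in> WE S"
    and Pcat_P4_pullback: "\<forall>u v Q q1 q2. v \<in> Fib S \<and> is_pullback C u v Q q1 q2 \<longrightarrow>
        is_pullback C (PM S u) (PM S v) (PO S Q) (PM S q1) (PM S q2)"
    and Pcat_P5: "\<forall>v\<in>Fib S. \<forall>AA a1 a2 BB b1 b2 w h Q q1 q2 k.
        is_product C (Dom C v) (Dom C v) AA a1 a2 \<and>
        is_product C (Cod C v) (Cod C v) BB b1 b2 \<and>
        w \<in> hom C AA BB \<and> Comp C b1 w = Comp C v a1 \<and> Comp C b2 w = Comp C v a2 \<and>
        h \<in> hom C (PO S (Cod C v)) BB \<and> Comp C b1 h = dl0 S (Cod C v) \<and>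
        Comp C b2 h = dl1 S (Cod C v) \<and>
        is_pullback C w h Q q1 q2 \<and>
        k \<in> hom C (PO S (Dom C v)) Q \<and>
        Comp C a1 (Comp C q1 k) = dl0 S (Dom C v) \<and> Comp C a2 (Comp C q1 k) = dl1 S (Dom C v) \<and>
        Comp C q2 k = PM S v
        \<longrightarrow> k \<in> Fib S"
  using assms unfolding is_Pcat_def Let_def by - (elim conjE, assumption)+

section \<open>The diagram category\<close>

locale diagram =
  fixes I :: "('i,'u) cat" and C :: "'i \<Rightarrow> ('o,'m) cat"
    and Fo :: "'u \<Rightarrow> 'o \<Rightarrow> 'o" and Fm :: "'u \<Rightarrow> 'm \<Rightarrow> 'm"
  assumes index_category: "is_category I"
    and level_category: "\<And>i. i \<in> Obj I \<Longrightarrow> is_category (C i)"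
    and transition_functor:
      "\<And>u. u \<in> Arr I \<Longrightarrow> is_functor (C (Dom I u)) (C (Cod I u)) (Fo u) (Fm u)"
begin

abbreviation G where "G \<equiv> Gamma I C Fo Fm"

lemma level: "i \<in> Obj I \<Longrightarrow> category (C i)"
  using level_category by (simp add: category_def)

lemma dom_index: "u \<in> Arr I \<Longrightarrow> Dom I u \<in> Obj I"
  and cod_index: "u \<in> Arr I \<Longrightarrow> Cod I u \<in> Obj I"
  using index_category by (simp_all add: is_category_def)

lemma transition_obj: "u \<in> Arr I \<Longrightarrow> A \<in> Obj (C (Dom I u)) \<Longrightarrow> Fo u A \<in> Obj (C (Cod I u))"
  using functor_obj[OF transition_functor] .

lemma transition_hom:
  "u \<in> Arr I \<Longrightarrow> f \<in> hom (C (Dom I u)) A B \<Longrightarrow> Fm u f \<in> hom (C (Cod I u)) (Fo u A) (Fo u B)"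
  using functor_hom[OF transition_functor] .

lemma transition_comp:
  "u \<in> Arr I \<Longrightarrow> f \<in> hom (C (Dom I u)) A B \<Longrightarrow> g \<in> hom (C (Dom I u)) B D \<Longrightarrow>
    Fm u (Comp (C (Dom I u)) g f) = Comp (C (Cod I u)) (Fm u g) (Fm u f)"
  using functor_comp[OF transition_functor] .

lemma transition_id:
  "u \<in> Arr I \<Longrightarrow> A \<in> Obj (C (Dom I u)) \<Longrightarrow> Fm u (Idm (C (Dom I u)) A) = Idm (C (Cod I u)) (Fo u A)"
  using functor_id[OF transition_functor] .

lemma Gamma_Obj: "Obj G = Gamma_obj I C Fo"
  and Gamma_Arr: "Arr G = Gamma_arr I C Fo Fm"
  and Gamma_Dom [simp]: "Dom G (X, Y, f) = X"
  and Gamma_Cod [simp]: "Cod G (X, Y, f) = Y"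
  and Gamma_Idm: "Idm G X = (X, X, lw (Obj I) (\<lambda>i. Idm (C i) (fst X i)))"
  and Gamma_Comp [simp]:
    "Comp G (Y', Z, g) (X, Y, f) = (X, Z, lw (Obj I) (\<lambda>i. Comp (C i) (g i) (f i)))"
  by (simp_all add: Gamma_def)

lemma Gamma_objI:
  assumes "\<And>i. i \<in> Obj I \<Longrightarrow> A i \<in> Obj (C i)" "\<And>i. i \<notin> Obj I \<Longrightarrow> A i = undefined"
    "\<And>u. u \<in> Arr I \<Longrightarrow> \<phi> u \<in> hom (C (Cod I u)) (Fo u (A (Dom I u))) (A (Cod I u))"
    "\<And>u. u \<notin> Arr I \<Longrightarrow> \<phi> u = undefined"
  shows "(A, \<phi>) \<in> Obj G"
  using assms by (simp add: Gamma_Obj Gamma_obj_def)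

lemma Gamma_obj_level: "X \<in> Obj G \<Longrightarrow> i \<in> Obj I \<Longrightarrow> fst X i \<in> Obj (C i)"
  and Gamma_obj_comparison: "X \<in> Obj G \<Longrightarrow> u \<in> Arr I \<Longrightarrow>
    snd X u \<in> hom (C (Cod I u)) (Fo u (fst X (Dom I u))) (fst X (Cod I u))"
  by (auto simp: Gamma_Obj Gamma_obj_def)

lemma Gamma_arrI:
  assumes "X \<in> Obj G" "Y \<in> Obj G"
    "\<And>i. i \<in> Obj I \<Longrightarrow> f i \<in> hom (C i) (fst X i) (fst Y i)"
    "\<And>i. i \<notin> Obj I \<Longrightarrow> f i = undefined"
    "\<And>u. u \<in> Arr I \<Longrightarrow> Comp (C (Cod I u)) (f (Cod I u)) (snd X u) =
        Comp (C (Cod I u)) (snd Y u) (Fm u (f (Dom I u)))"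
  shows "(X, Y, f) \<in> Arr G"
  using assms by (simp add: Gamma_Arr Gamma_arr_def Gamma_Obj)

lemma
  assumes "(X, Y, f) \<in> Arr G"
  shows Gamma_arr_dom: "X \<in> Obj G"
    and Gamma_arr_cod: "Y \<in> Obj G"
    and Gamma_arr_level: "i \<in> Obj I \<Longrightarrow> f i \<in> hom (C i) (fst X i) (fst Y i)"
    and Gamma_arr_undefined: "i \<notin> Obj I \<Longrightarrow> f i = undefined"
    and Gamma_arr_square: "u \<in> Arr I \<Longrightarrow> Comp (C (Cod I u)) (f (Cod I u)) (snd X u) =
        Comp (C (Cod I u)) (snd Y u) (Fm u (f (Dom I u)))"
  using assms by (auto simp: Gamma_Arr Gamma_arr_def Gamma_Obj)

lemma Gamma_homE:
  assumes "F \<in> hom G X Y"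
  obtains f where "F = (X, Y, f)" "(X, Y, f) \<in> Arr G"
  using assms by (cases F) (auto simp: in_hom_iff)

lemma Gamma_arr_lw: "(X, Y, f) \<in> Arr G \<Longrightarrow> lw (Obj I) f = f"
  by (rule lw_eqI) (auto dest: Gamma_arr_undefined)

lemma Gamma_arr_eqI:
  "(X, Y, f) \<in> Arr G \<Longrightarrow> (X', Y', g) \<in> Arr G \<Longrightarrow> (\<And>i. i \<in> Obj I \<Longrightarrow> f i = g i) \<Longrightarrow> f = g"
  by (rule ext) (metis Gamma_arr_undefined)

lemma Gamma_Comp_level:
  "Comp G (Y', Z, g) (X, Y, f) = (X', Z', h) \<Longrightarrow> i \<in> Obj I \<Longrightarrow> Comp (C i) (g i) (f i) = h i"
  by (auto dest: lw_eqD)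

lemma Gamma_id_arr:
  assumes X: "X \<in> Obj G"
  shows "Idm G X \<in> hom G X X"
proof -
  have "(X, X, lw (Obj I) (\<lambda>i. Idm (C i) (fst X i))) \<in> Arr G"
  proof (rule Gamma_arrI[OF X X])
    fix i assume "i \<in> Obj I"
    thus "lw (Obj I) (\<lambda>i. Idm (C i) (fst X i)) i \<in> hom (C i) (fst X i) (fst X i)"
      using category.id_hom[OF level] Gamma_obj_level[OF X] by simp
  next
    fix u assume u: "u \<in> Arr I"
    note \<phi> = Gamma_obj_comparison[OF X u]
    show "Comp (C (Cod I u)) (lw (Obj I) (\<lambda>i. Idm (C i) (fst X i)) (Cod I u)) (snd X u) =
        Comp (C (Cod I u)) (snd X u) (Fm u (lw (Obj I) (\<lambda>i. Idm (C i) (fst X i)) (Dom I u)))"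
      using u dom_index cod_index transition_id[OF u Gamma_obj_level[OF X dom_index[OF u]]]
        category.id_comp[OF level[OF cod_index[OF u]] \<phi>] category.comp_id[OF level[OF cod_index[OF u]] \<phi>]
      by simp
  qed simp
  thus ?thesis by (simp add: Gamma_Idm in_hom_iff)
qed

lemma Gamma_comp_arr:
  assumes f: "(X, Y, f) \<in> Arr G" and g: "(Y, Z, g) \<in> Arr G"
  shows "(X, Z, lw (Obj I) (\<lambda>i. Comp (C i) (g i) (f i))) \<in> Arr G"
proof (rule Gamma_arrI)
  show "X \<in> Obj G" "Z \<in> Obj G" using Gamma_arr_dom[OF f] Gamma_arr_cod[OF g] .
  fix i assume i: "i \<in> Obj I"
  show "lw (Obj I) (\<lambda>i. Comp (C i) (g i) (f i)) i \<in> hom (C i) (fst X i) (fst Z i)"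
    using i category.comp_hom[OF level[OF i] Gamma_arr_level[OF f i] Gamma_arr_level[OF g i]] by simp
next
  fix u assume u: "u \<in> Arr I"
  let ?i = "Dom I u" and ?j = "Cod I u"
  have i: "?i \<in> Obj I" and j: "?j \<in> Obj I" using dom_index cod_index u by auto
  interpret Cj: category "C ?j" using level j .
  note fi = Gamma_arr_level[OF f i] and gi = Gamma_arr_level[OF g i]
  note fj = Gamma_arr_level[OF f j] and gj = Gamma_arr_level[OF g j]
  note \<phi>X = Gamma_obj_comparison[OF Gamma_arr_dom[OF f] u]
    and \<phi>Y = Gamma_obj_comparison[OF Gamma_arr_cod[OF f] u]
    and \<phi>Z = Gamma_obj_comparison[OF Gamma_arr_cod[OF g] u]
  note Ff = transition_hom[OF u fi] and Fg = transition_hom[OF u gi]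
  have "Comp (C ?j) (Comp (C ?j) (g ?j) (f ?j)) (snd X u)
      = Comp (C ?j) (g ?j) (Comp (C ?j) (snd Y u) (Fm u (f ?i)))"
    using Cj.comp_assoc[OF \<phi>X fj gj] Gamma_arr_square[OF f u] by simp
  also have "\<dots> = Comp (C ?j) (Comp (C ?j) (snd Z u) (Fm u (g ?i))) (Fm u (f ?i))"
    using Cj.comp_assoc[OF Ff \<phi>Y gj] Gamma_arr_square[OF g u] by simp
  also have "\<dots> = Comp (C ?j) (snd Z u) (Fm u (Comp (C ?i) (g ?i) (f ?i)))"
    using Cj.comp_assoc[OF Ff Fg \<phi>Z] transition_comp[OF u fi gi] by simp
  finally show "Comp (C ?j) (lw (Obj I) (\<lambda>i. Comp (C i) (g i) (f i)) ?j) (snd X u) =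
      Comp (C ?j) (snd Z u) (Fm u (lw (Obj I) (\<lambda>i. Comp (C i) (g i) (f i)) ?i))"
    using i j by simp
qed simp

lemma Gamma_category: "is_category G"
  unfolding is_category_def
proof (intro conjI ballI allI impI)
  fix F assume "F \<in> Arr G"
  thus "Dom G F \<in> Obj G" "Cod G F \<in> Obj G"
    by (cases F; simp add: Gamma_arr_dom Gamma_arr_cod)+
next
  fix X assume "X \<in> Obj G"
  thus "Idm G X \<in> hom G X X" by (rule Gamma_id_arr)
next
  fix F H assume "F \<in> Arr G \<and> H \<in> Arr G \<and> Cod G F = Dom G H"
  thus "Comp G H F \<in> hom G (Dom G F) (Cod G H)"
    using Gamma_comp_arr by (cases F; cases H) (auto simp: in_hom_iff)
next
  fix F assume F: "F \<in> Arr G"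
  obtain X Y f where Ff: "F = (X, Y, f)" by (cases F)
  have f: "(X, Y, f) \<in> Arr G" using F Ff by simp
  have "lw (Obj I) (\<lambda>i. Comp (C i) (f i) (lw (Obj I) (\<lambda>i. Idm (C i) (fst X i)) i)) = f"
    "lw (Obj I) (\<lambda>i. Comp (C i) (lw (Obj I) (\<lambda>i. Idm (C i) (fst Y i)) i) (f i)) = f"
    by (rule lw_eqI; simp add: category.comp_id[OF level Gamma_arr_level[OF f]]
        category.id_comp[OF level Gamma_arr_level[OF f]] Gamma_arr_undefined[OF f])+
  thus "Comp G F (Idm G (Dom G F)) = F" "Comp G (Idm G (Cod G F)) F = F"
    using Ff by (simp_all add: Gamma_Idm)
next
  fix F H K assume FHK: "F \<in> Arr G \<and> H \<in> Arr G \<and> K \<in> Arr G \<and> Cod G F = Dom G H \<and> Cod G H = Dom G K"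
  obtain X Y f where Ff: "F = (X, Y, f)" by (cases F)
  obtain Y' Z g where Hg: "H = (Y', Z, g)" by (cases H)
  obtain Z' W k where Kk: "K = (Z', W, k)" by (cases K)
  have "Y' = Y" "Z' = Z" using FHK Ff Hg Kk by simp_all
  hence "lw (Obj I) (\<lambda>i. Comp (C i) (k i) (Comp (C i) (g i) (f i))) =
      lw (Obj I) (\<lambda>i. Comp (C i) (Comp (C i) (k i) (g i)) (f i))"
    using FHK Ff Hg Kk Gamma_arr_level[of X Y f] Gamma_arr_level[of Y Z g] Gamma_arr_level[of Z W k]
    by (intro lw_cong) (metis category.comp_assoc level)
  thus "Comp G K (Comp G H F) = Comp G (Comp G K H) F" using Ff Hg Kk by simp
qed

sublocale Gamma: category G
  using Gamma_category by unfold_locales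

lemma Gamma_lift_square:
  assumes Z: "Z \<in> Obj G" and X: "X \<in> Obj G" and w: "w \<in> Arr I"
    and k: "(X, Y, k) \<in> Arr G" and l: "(Z, Y, l) \<in> Arr G"
    and m: "\<And>i. i \<in> Obj I \<Longrightarrow> m i \<in> hom (C i) (fst Z i) (fst X i)"
    and km: "\<And>i. i \<in> Obj I \<Longrightarrow> Comp (C i) (k i) (m i) = l i"
  shows "Comp (C (Cod I w)) (k (Cod I w)) (Comp (C (Cod I w)) (m (Cod I w)) (snd Z w)) =
    Comp (C (Cod I w)) (k (Cod I w)) (Comp (C (Cod I w)) (snd X w) (Fm w (m (Dom I w))))"
proof -
  let ?i = "Dom I w" and ?j = "Cod I w"
  have i: "?i \<in> Obj I" and j: "?j \<in> Obj I" using w dom_index cod_index by auto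
  interpret Cj: category "C ?j" using level j .
  note \<phi>Z = Gamma_obj_comparison[OF Z w] and \<phi>X = Gamma_obj_comparison[OF X w]
    and \<phi>Y = Gamma_obj_comparison[OF Gamma_arr_cod[OF k] w]
  note ki = Gamma_arr_level[OF k i] and kj = Gamma_arr_level[OF k j]
  note Fm = transition_hom[OF w m[OF i]] and Fk = transition_hom[OF w ki]
  have "Comp (C ?j) (k ?j) (Comp (C ?j) (m ?j) (snd Z w)) = Comp (C ?j) (l ?j) (snd Z w)"
    using Cj.comp_assoc[OF \<phi>Z m[OF j] kj] km[OF j] by simp
  also have "\<dots> = Comp (C ?j) (snd Y w) (Comp (C ?j) (Fm w (k ?i)) (Fm w (m ?i)))"
    using Gamma_arr_square[OF l w] km[OF i] transition_comp[OF w m[OF i] ki] by simp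
  also have "\<dots> = Comp (C ?j) (Comp (C ?j) (k ?j) (snd X w)) (Fm w (m ?i))"
    using Cj.comp_assoc[OF Fm Fk \<phi>Y] Gamma_arr_square[OF k w] by simp
  also have "\<dots> = Comp (C ?j) (k ?j) (Comp (C ?j) (snd X w) (Fm w (m ?i)))"
    using Cj.comp_assoc[OF Fm \<phi>X kj] by simp
  finally show ?thesis .
qed

lemma Gamma_iso_level:
  assumes iso: "is_iso G (X, Y, f)" and i: "i \<in> Obj I"
  shows "is_iso (C i) (f i)"
proof -
  have f: "(X, Y, f) \<in> Arr G" using iso by (simp add: is_iso_def)
  obtain H where H: "H \<in> hom G Y X" "Comp G H (X, Y, f) = Idm G X" "Comp G (X, Y, f) H = Idm G Y"
    using iso unfolding is_iso_def by auto
  obtain g where Hg: "H = (Y, X, g)" and g: "(Y, X, g) \<in> Arr G" using Gamma_homE[OF H(1)] .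
  have "Comp (C i) (g i) (f i) = Idm (C i) (fst X i)" "Comp (C i) (f i) (g i) = Idm (C i) (fst Y i)"
    using H(2,3) Hg i by (auto simp: Gamma_Idm dest: lw_eqD)
  thus ?thesis
    using Gamma_arr_level[OF f i] Gamma_arr_level[OF g i] unfolding is_iso_def by (auto simp: in_hom_iff)
qed

lemma Gamma_iso_of_levelwise:
  assumes f: "(X, Y, f) \<in> Arr G" and iso: "\<And>i. i \<in> Obj I \<Longrightarrow> is_iso (C i) (f i)"
  shows "is_iso G (X, Y, f)"
proof -
  have X: "X \<in> Obj G" and Y: "Y \<in> Obj G" using Gamma_arr_dom[OF f] Gamma_arr_cod[OF f] .
  define inverse where "inverse i = (SOME g. g \<in> hom (C i) (fst Y i) (fst X i) \<and>
      Comp (C i) g (f i) = Idm (C i) (fst X i) \<and> Comp (C i) (f i) g = Idm (C i) (fst Y i))" for i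
  have inverse: "inverse i \<in> hom (C i) (fst Y i) (fst X i) \<and>
      Comp (C i) (inverse i) (f i) = Idm (C i) (fst X i) \<and> Comp (C i) (f i) (inverse i) = Idm (C i) (fst Y i)"
    if i: "i \<in> Obj I" for i
    unfolding inverse_def
    by (rule someI_ex) (use iso[OF i] Gamma_arr_level[OF f i] in \<open>auto simp: is_iso_def in_hom_iff\<close>)
  have g: "(Y, X, lw (Obj I) inverse) \<in> Arr G"
  proof (rule Gamma_arrI[OF Y X])
    fix i assume "i \<in> Obj I"
    thus "lw (Obj I) inverse i \<in> hom (C i) (fst Y i) (fst X i)" using inverse by simp
  next
    fix w assume w: "w \<in> Arr I"
    let ?i = "Dom I w" and ?j = "Cod I w"
    have i: "?i \<in> Obj I" and j: "?j \<in> Obj I" using w dom_index cod_index by auto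
    interpret Cj: category "C ?j" using level j .
    note \<phi>X = Gamma_obj_comparison[OF X w] and \<phi>Y = Gamma_obj_comparison[OF Y w]
    note fi = Gamma_arr_level[OF f i] and fj = Gamma_arr_level[OF f j]
    have gi: "inverse ?i \<in> hom (C ?i) (fst Y ?i) (fst X ?i)"
      and gj: "inverse ?j \<in> hom (C ?j) (fst Y ?j) (fst X ?j)" using inverse i j by auto
    note Fg = transition_hom[OF w gi] and Ff = transition_hom[OF w fi]
    have "Comp (C ?j) (snd X w) (Fm w (inverse ?i)) =
        Comp (C ?j) (inverse ?j) (Comp (C ?j) (f ?j) (Comp (C ?j) (snd X w) (Fm w (inverse ?i))))"
      using Cj.comp_assoc[OF Cj.comp_hom[OF Fg \<phi>X] fj gj] inverse[OF j]
        Cj.id_comp[OF Cj.comp_hom[OF Fg \<phi>X]] by simp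
    also have "Comp (C ?j) (f ?j) (Comp (C ?j) (snd X w) (Fm w (inverse ?i))) =
        Comp (C ?j) (snd Y w) (Fm w (Comp (C ?i) (f ?i) (inverse ?i)))"
      using Cj.comp_assoc[OF Fg \<phi>X fj] Gamma_arr_square[OF f w] Cj.comp_assoc[OF Fg Ff \<phi>Y]
        transition_comp[OF w gi fi] by simp
    also have "\<dots> = snd Y w"
      using inverse[OF i] transition_id[OF w Gamma_obj_level[OF Y i]] Cj.comp_id[OF \<phi>Y] by simp
    finally show "Comp (C ?j) (lw (Obj I) inverse ?j) (snd Y w) =
        Comp (C ?j) (snd X w) (Fm w (lw (Obj I) inverse ?i))" using i j by simp
  qed simp
  have "Comp G (Y, X, lw (Obj I) inverse) (X, Y, f) = Idm G X"
    "Comp G (X, Y, f) (Y, X, lw (Obj I) inverse) = Idm G Y"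
    using inverse by (auto simp: Gamma_Idm intro!: lw_cong)
  moreover have "(Y, X, lw (Obj I) inverse) \<in> hom G Y X" using g by (simp add: in_hom_iff)
  ultimately show ?thesis using f unfolding is_iso_def Gamma_Dom Gamma_Cod by blast
qed

lemma Gamma_levelwise_terminal:
  assumes E: "E \<in> Obj G" and terminal: "\<And>i. i \<in> Obj I \<Longrightarrow> is_terminal (C i) (fst E i)"
  shows "is_terminal G E"
  unfolding is_terminal_def
proof (intro conjI ballI E)
  fix Z assume Z: "Z \<in> Obj G"
  define t where "t i = (THE t. t \<in> hom (C i) (fst Z i) (fst E i))" for i
  have t: "t i \<in> hom (C i) (fst Z i) (fst E i)" if i: "i \<in> Obj I" for i
    unfolding t_def
    by (rule theI') (use terminal[OF i] Gamma_obj_level[OF Z i] in \<open>simp add: is_terminal_def\<close>)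
  have T: "(Z, E, lw (Obj I) t) \<in> Arr G"
  proof (rule Gamma_arrI[OF Z E])
    fix i assume "i \<in> Obj I"
    thus "lw (Obj I) t i \<in> hom (C i) (fst Z i) (fst E i)" using t by simp
  next
    fix w assume w: "w \<in> Arr I"
    let ?i = "Dom I w" and ?j = "Cod I w"
    have i: "?i \<in> Obj I" and j: "?j \<in> Obj I" using w dom_index cod_index by auto
    interpret Cj: category "C ?j" using level j .
    show "Comp (C ?j) (lw (Obj I) t ?j) (snd Z w) = Comp (C ?j) (snd E w) (Fm w (lw (Obj I) t ?i))"
      using Cj.terminal_unique[OF terminal[OF j] Cj.comp_hom[OF Gamma_obj_comparison[OF Z w] t[OF j]]
          Cj.comp_hom[OF transition_hom[OF w t[OF i]] Gamma_obj_comparison[OF E w]]] i j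
      by simp
  qed simp
  show "\<exists>!T. T \<in> hom G Z E"
  proof
    show "(Z, E, lw (Obj I) t) \<in> hom G Z E" using T by (simp add: in_hom_iff)
    fix T' assume "T' \<in> hom G Z E"
    then obtain t' where T': "T' = (Z, E, t')" "(Z, E, t') \<in> Arr G" by (rule Gamma_homE)
    have "t' = lw (Obj I) t"
      by (rule Gamma_arr_eqI[OF T'(2) T])
        (simp add: category.terminal_unique[OF level terminal Gamma_arr_level[OF T'(2)] t])
    thus "T' = (Z, E, lw (Obj I) t)" using T' by simp
  qed
qed

lemma Gamma_terminal_exists:
  assumes "\<And>i. i \<in> Obj I \<Longrightarrow> \<exists>e. is_terminal (C i) e"
  shows "\<exists>E. is_terminal G E \<and> (\<forall>i\<in>Obj I. is_terminal (C i) (fst E i))"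
proof -
  define e where "e i = (SOME e. is_terminal (C i) e)" for i
  have e: "is_terminal (C i) (e i)" if "i \<in> Obj I" for i
    unfolding e_def using assms[OF that] by (rule someI_ex)
  define t where "t w = (THE t. t \<in> hom (C (Cod I w)) (Fo w (e (Dom I w))) (e (Cod I w)))" for w
  have t: "t w \<in> hom (C (Cod I w)) (Fo w (e (Dom I w))) (e (Cod I w))" if w: "w \<in> Arr I" for w
    unfolding t_def
    by (rule theI') (use e[OF cod_index[OF w]] transition_obj[OF w] e[OF dom_index[OF w]]
        in \<open>simp add: is_terminal_def\<close>)
  have E: "(lw (Obj I) e, lw (Arr I) t) \<in> Obj G"
    by (rule Gamma_objI) (use e t dom_index cod_index in \<open>auto simp: is_terminal_def\<close>)
  have "\<forall>i\<in>Obj I. is_terminal (C i) (fst (lw (Obj I) e, lw (Arr I) t) i)" using e by simp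
  with Gamma_levelwise_terminal[OF E] show ?thesis by blast
qed

lemma Gamma_terminal_level:
  assumes ex: "\<And>i. i \<in> Obj I \<Longrightarrow> \<exists>e. is_terminal (C i) e"
    and E: "is_terminal G E" and i: "i \<in> Obj I"
  shows "is_terminal (C i) (fst E i)"
proof -
  obtain E' where E': "is_terminal G E'" and level_E': "\<forall>i\<in>Obj I. is_terminal (C i) (fst E' i)"
    using Gamma_terminal_exists[OF ex] by blast
  have E_obj: "E \<in> Obj G" and E'_obj: "E' \<in> Obj G" using E E' by (simp_all add: is_terminal_def)
  obtain H where H: "H \<in> hom G E' E" using E E'_obj unfolding is_terminal_def by blast
  obtain H' where H': "H' \<in> hom G E E'" using E' E_obj unfolding is_terminal_def by blast
  obtain h where h: "H = (E', E, h)" "(E', E, h) \<in> Arr G" using Gamma_homE[OF H] .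
  obtain h' where h': "H' = (E, E', h')" "(E, E', h') \<in> Arr G" using Gamma_homE[OF H'] .
  have "Comp G H H' = Idm G E"
    using Gamma.terminal_unique[OF E Gamma.comp_hom[OF H' H] Gamma.id_hom[OF E_obj]] .
  hence "Comp (C i) (h i) (h' i) = Idm (C i) (fst E i)"
    using h h' i by (auto simp: Gamma_Idm dest: lw_eqD)
  thus ?thesis
    using category.terminal_retract[OF level[OF i] level_E'[rule_format, OF i] Gamma_obj_level[OF E_obj i]
        Gamma_arr_level[OF h(2) i] Gamma_arr_level[OF h'(2) i]] by simp
qed

end

section \<open>Level-wise limits\<close>

text \<open>\<open>R i\<close> is the relation defining the limit at level \<open>i\<close> and \<open>RG\<close> the corresponding relation
  in \<open>\<Gamma>C\<close>; \<open>R_transition\<close> is what makes the comparison maps between the level-wise limits exist.\<close>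

locale levelwise_limit = diagram I C Fo Fm
  for I :: "('i,'u) cat" and C :: "'i \<Rightarrow> ('o,'m) cat"
    and Fo :: "'u \<Rightarrow> 'o \<Rightarrow> 'o" and Fm :: "'u \<Rightarrow> 'm \<Rightarrow> 'm" +
  fixes R :: "'i \<Rightarrow> 'm \<Rightarrow> 'm \<Rightarrow> bool"
    and RG :: "('i,'u,'o,'m) gmor \<Rightarrow> ('i,'u,'o,'m) gmor \<Rightarrow> bool"
    and A B :: "('i,'u,'o,'m) gobj"
  assumes A: "A \<in> Obj G" and B: "B \<in> Obj G"
    and RG_iff: "\<And>Z f g. (Z, A, f) \<in> Arr G \<Longrightarrow> (Z, B, g) \<in> Arr G \<Longrightarrow>
      RG (Z, A, f) (Z, B, g) \<longleftrightarrow> (\<forall>i\<in>Obj I. R i (f i) (g i))"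
    and R_precomp: "\<And>i Y Z h f g. i \<in> Obj I \<Longrightarrow> h \<in> hom (C i) Y Z \<Longrightarrow>
      f \<in> hom (C i) Z (fst A i) \<Longrightarrow> g \<in> hom (C i) Z (fst B i) \<Longrightarrow> R i f g \<Longrightarrow>
      R i (Comp (C i) f h) (Comp (C i) g h)"
    and R_transition: "\<And>u Z f g. u \<in> Arr I \<Longrightarrow>
      f \<in> hom (C (Dom I u)) Z (fst A (Dom I u)) \<Longrightarrow> g \<in> hom (C (Dom I u)) Z (fst B (Dom I u)) \<Longrightarrow>
      R (Dom I u) f g \<Longrightarrow>
      R (Cod I u) (Comp (C (Cod I u)) (snd A u) (Fm u f)) (Comp (C (Cod I u)) (snd B u) (Fm u g))"
    and level_limit_exists: "\<And>i. i \<in> Obj I \<Longrightarrow>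
      \<exists>X p1 p2. limit_span (C i) (R i) (fst A i) (fst B i) X p1 p2"
begin

lemma level_limit_monic:
  assumes i: "i \<in> Obj I" and L: "limit_span (C i) (R i) (fst A i) (fst B i) X p1 p2"
    and h: "h \<in> hom (C i) Y X" and h': "h' \<in> hom (C i) Y X"
    and "Comp (C i) p1 h = Comp (C i) p1 h'" "Comp (C i) p2 h = Comp (C i) p2 h'"
  shows "h = h'"
proof -
  have p1: "p1 \<in> hom (C i) X (fst A i)" and p2: "p2 \<in> hom (C i) X (fst B i)"
    and U: "universal_span (C i) (R i) X p1 p2" and R: "R i p1 p2"
    using L by (simp_all add: limit_span_def)
  show ?thesis
    using category.universal_span_unique[OF level[OF i] U p1 p2 h h' assms(5,6)]
      R_precomp[OF i h p1 p2 R] by simp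
qed

lemma Gamma_arr_into_limit:
  assumes f1: "(X, A, f1) \<in> Arr G" and f2: "(X, B, f2) \<in> Arr G"
    and L: "\<And>i. i \<in> Obj I \<Longrightarrow> limit_span (C i) (R i) (fst A i) (fst B i) (fst X i) (f1 i) (f2 i)"
    and f: "(Z, A, f) \<in> Arr G" and g: "(Z, B, g) \<in> Arr G"
    and m: "\<And>i. i \<in> Obj I \<Longrightarrow> m i \<in> hom (C i) (fst Z i) (fst X i) \<and>
      Comp (C i) (f1 i) (m i) = f i \<and> Comp (C i) (f2 i) (m i) = g i"
  shows "(Z, X, lw (Obj I) m) \<in> Arr G"
proof (rule Gamma_arrI[OF Gamma_arr_dom[OF f] Gamma_arr_dom[OF f1]])
  fix i assume "i \<in> Obj I"
  thus "lw (Obj I) m i \<in> hom (C i) (fst Z i) (fst X i)" using m by simp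
next
  fix w assume w: "w \<in> Arr I"
  let ?i = "Dom I w" and ?j = "Cod I w"
  have i: "?i \<in> Obj I" and j: "?j \<in> Obj I" using w dom_index cod_index by auto
  have Z: "Z \<in> Obj G" and X: "X \<in> Obj G" using Gamma_arr_dom[OF f] Gamma_arr_dom[OF f1] .
  interpret Cj: category "C ?j" using level j .
  have "Comp (C ?j) (m ?j) (snd Z w) = Comp (C ?j) (snd X w) (Fm w (m ?i))"
  proof (rule level_limit_monic[OF j L[OF j]])
    show "Comp (C ?j) (m ?j) (snd Z w) \<in> hom (C ?j) (Fo w (fst Z ?i)) (fst X ?j)"
      using Cj.comp_hom[OF Gamma_obj_comparison[OF Z w]] m[OF j] by blast
    show "Comp (C ?j) (snd X w) (Fm w (m ?i)) \<in> hom (C ?j) (Fo w (fst Z ?i)) (fst X ?j)"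
      using Cj.comp_hom[OF transition_hom[OF w] Gamma_obj_comparison[OF X w]] m[OF i] by blast
    show "Comp (C ?j) (f1 ?j) (Comp (C ?j) (m ?j) (snd Z w)) =
        Comp (C ?j) (f1 ?j) (Comp (C ?j) (snd X w) (Fm w (m ?i)))"
      using Gamma_lift_square[OF Z X w f1 f, of m] m by blast
    show "Comp (C ?j) (f2 ?j) (Comp (C ?j) (m ?j) (snd Z w)) =
        Comp (C ?j) (f2 ?j) (Comp (C ?j) (snd X w) (Fm w (m ?i)))"
      using Gamma_lift_square[OF Z X w f2 g, of m] m by blast
  qed
  thus "Comp (C ?j) (lw (Obj I) m ?j) (snd Z w) = Comp (C ?j) (snd X w) (Fm w (lw (Obj I) m ?i))"
    using i j by simp
qed simp

lemma Gamma_limit_span_of_levelwise: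
  assumes f1: "(X, A, f1) \<in> Arr G" and f2: "(X, B, f2) \<in> Arr G"
    and L: "\<And>i. i \<in> Obj I \<Longrightarrow> limit_span (C i) (R i) (fst A i) (fst B i) (fst X i) (f1 i) (f2 i)"
  shows "limit_span G RG A B X (X, A, f1) (X, B, f2)"
proof -
  have X: "X \<in> Obj G" using Gamma_arr_dom[OF f1] .
  have universal: "\<exists>!K. K \<in> hom G Z X \<and> Comp G (X, A, f1) K = F \<and> Comp G (X, B, f2) K = H"
    if Z: "Z \<in> Obj G" and F: "F \<in> hom G Z A" and H: "H \<in> hom G Z B" and RFH: "RG F H" for Z F H
  proof -
    obtain f where Ff: "F = (Z, A, f)" and f: "(Z, A, f) \<in> Arr G" using Gamma_homE[OF F] .
    obtain g where Hg: "H = (Z, B, g)" and g: "(Z, B, g) \<in> Arr G" using Gamma_homE[OF H] .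
    have Rfg: "R i (f i) (g i)" if "i \<in> Obj I" for i using RFH RG_iff[OF f g] Ff Hg that by simp
    define m where "m i = (THE h. h \<in> hom (C i) (fst Z i) (fst X i) \<and>
        Comp (C i) (f1 i) h = f i \<and> Comp (C i) (f2 i) h = g i)" for i
    have m: "m i \<in> hom (C i) (fst Z i) (fst X i) \<and> Comp (C i) (f1 i) (m i) = f i \<and>
        Comp (C i) (f2 i) (m i) = g i" if i: "i \<in> Obj I" for i
    proof -
      have "universal_span (C i) (R i) (fst X i) (f1 i) (f2 i)" using L[OF i] by (simp add: limit_span_def)
      from category.universal_span_ex1[OF level[OF i] this Gamma_arr_level[OF f1 i] Gamma_arr_level[OF f2 i]
          Gamma_obj_level[OF Z i] Gamma_arr_level[OF f i] Gamma_arr_level[OF g i] Rfg[OF i]]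
      show ?thesis unfolding m_def by (rule theI')
    qed
    have M: "(Z, X, lw (Obj I) m) \<in> Arr G" using Gamma_arr_into_limit[OF f1 f2 L f g m] by blast
    show ?thesis
    proof
      have "lw (Obj I) (\<lambda>i. Comp (C i) (f1 i) (m i)) = f" "lw (Obj I) (\<lambda>i. Comp (C i) (f2 i) (m i)) = g"
        using m Gamma_arr_undefined[OF f] Gamma_arr_undefined[OF g] by (auto intro!: lw_eqI)
      thus "(Z, X, lw (Obj I) m) \<in> hom G Z X \<and> Comp G (X, A, f1) (Z, X, lw (Obj I) m) = F \<and>
          Comp G (X, B, f2) (Z, X, lw (Obj I) m) = H" using M Ff Hg by (simp add: in_hom_iff)
      fix K assume K: "K \<in> hom G Z X \<and> Comp G (X, A, f1) K = F \<and> Comp G (X, B, f2) K = H"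
      then obtain k where Kk: "K = (Z, X, k)" and k: "(Z, X, k) \<in> Arr G" using Gamma_homE by blast
      have "k = lw (Obj I) m"
      proof (rule Gamma_arr_eqI[OF k M])
        fix i assume i: "i \<in> Obj I"
        have "Comp (C i) (f1 i) (k i) = f i" "Comp (C i) (f2 i) (k i) = g i"
          using K Kk Ff Hg i by (auto dest: lw_eqD)
        thus "k i = lw (Obj I) m i"
          using level_limit_monic[OF i L[OF i] Gamma_arr_level[OF k i], of "m i"] m[OF i] i by simp
      qed
      thus "K = (Z, X, lw (Obj I) m)" using Kk by simp
    qed
  qed
  have "universal_span G RG X (X, A, f1) (X, B, f2)"
    unfolding universal_span_def using universal by simp
  moreover have "RG (X, A, f1) (X, B, f2)" using RG_iff[OF f1 f2] L by (simp add: limit_span_def)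
  ultimately show ?thesis using X f1 f2 unfolding limit_span_def by (simp add: in_hom_iff)
qed

lemma Gamma_limit_span_exists:
  "\<exists>X f1 f2. (X, A, f1) \<in> Arr G \<and> (X, B, f2) \<in> Arr G \<and>
     (\<forall>i\<in>Obj I. limit_span (C i) (R i) (fst A i) (fst B i) (fst X i) (f1 i) (f2 i))"
proof -
  define span where "span i = (SOME t. limit_span (C i) (R i) (fst A i) (fst B i)
    (fst t) (fst (snd t)) (snd (snd t)))" for i
  define Xl p1 p2 where "Xl i = fst (span i)" and "p1 i = fst (snd (span i))"
    and "p2 i = snd (snd (span i))" for i
  have L: "limit_span (C i) (R i) (fst A i) (fst B i) (Xl i) (p1 i) (p2 i)" if i: "i \<in> Obj I" for i
  proof -
    have "\<exists>t. limit_span (C i) (R i) (fst A i) (fst B i) (fst t) (fst (snd t)) (snd (snd t))"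
      using level_limit_exists[OF i] by auto
    from someI_ex[OF this] show ?thesis unfolding Xl_def p1_def p2_def span_def .
  qed
  hence p1: "p1 i \<in> hom (C i) (Xl i) (fst A i)" and p2: "p2 i \<in> hom (C i) (Xl i) (fst B i)"
    and Xl: "Xl i \<in> Obj (C i)" if "i \<in> Obj I" for i
    using that by (simp_all add: limit_span_def)
  define \<psi> where "\<psi> w = (THE h. h \<in> hom (C (Cod I w)) (Fo w (Xl (Dom I w))) (Xl (Cod I w)) \<and>
      Comp (C (Cod I w)) (p1 (Cod I w)) h = Comp (C (Cod I w)) (snd A w) (Fm w (p1 (Dom I w))) \<and>
      Comp (C (Cod I w)) (p2 (Cod I w)) h = Comp (C (Cod I w)) (snd B w) (Fm w (p2 (Dom I w))))" for w
  have \<psi>: "\<psi> w \<in> hom (C (Cod I w)) (Fo w (Xl (Dom I w))) (Xl (Cod I w)) \<and>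
      Comp (C (Cod I w)) (p1 (Cod I w)) (\<psi> w) = Comp (C (Cod I w)) (snd A w) (Fm w (p1 (Dom I w))) \<and>
      Comp (C (Cod I w)) (p2 (Cod I w)) (\<psi> w) = Comp (C (Cod I w)) (snd B w) (Fm w (p2 (Dom I w)))"
    if w: "w \<in> Arr I" for w
  proof -
    let ?i = "Dom I w" and ?j = "Cod I w"
    have i: "?i \<in> Obj I" and j: "?j \<in> Obj I" using w dom_index cod_index by auto
    interpret Cj: category "C ?j" using level j .
    have U: "universal_span (C ?j) (R ?j) (Xl ?j) (p1 ?j) (p2 ?j)" using L[OF j] by (simp add: limit_span_def)
    have "\<exists>!h. h \<in> hom (C ?j) (Fo w (Xl ?i)) (Xl ?j) \<and>
        Comp (C ?j) (p1 ?j) h = Comp (C ?j) (snd A w) (Fm w (p1 ?i)) \<and>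
        Comp (C ?j) (p2 ?j) h = Comp (C ?j) (snd B w) (Fm w (p2 ?i))"
      by (rule Cj.universal_span_ex1[OF U p1[OF j] p2[OF j] transition_obj[OF w Xl[OF i]]
          Cj.comp_hom[OF transition_hom[OF w p1[OF i]] Gamma_obj_comparison[OF A w]]
          Cj.comp_hom[OF transition_hom[OF w p2[OF i]] Gamma_obj_comparison[OF B w]]
          R_transition[OF w p1[OF i] p2[OF i]]])
        (use L[OF i] in \<open>simp add: limit_span_def\<close>)
    thus ?thesis unfolding \<psi>_def by (rule theI')
  qed
  define X where "X = (lw (Obj I) Xl, lw (Arr I) \<psi>)"
  have X_obj: "X \<in> Obj G"
    unfolding X_def by (rule Gamma_objI) (simp_all add: Xl \<psi> dom_index cod_index)
  have "(X, A, lw (Obj I) p1) \<in> Arr G" "(X, B, lw (Obj I) p2) \<in> Arr G"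
    by (rule Gamma_arrI[OF X_obj A] Gamma_arrI[OF X_obj B];
        use p1 p2 \<psi> dom_index cod_index in \<open>simp add: X_def\<close>)+
  moreover have "\<forall>i\<in>Obj I. limit_span (C i) (R i) (fst A i) (fst B i) (fst X i) (lw (Obj I) p1 i) (lw (Obj I) p2 i)"
    using L by (simp add: X_def)
  ultimately show ?thesis by blast
qed

lemma Gamma_limit_span_level:
  assumes L: "limit_span G RG A B X P1 P2"
  obtains f1 f2 where "P1 = (X, A, f1)" "P2 = (X, B, f2)" "(X, A, f1) \<in> Arr G" "(X, B, f2) \<in> Arr G"
    "\<And>i. i \<in> Obj I \<Longrightarrow> limit_span (C i) (R i) (fst A i) (fst B i) (fst X i) (f1 i) (f2 i)"
proof -
  have X: "X \<in> Obj G" and P1: "P1 \<in> hom G X A" and P2: "P2 \<in> hom G X B" and RP: "RG P1 P2"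
    and U: "universal_span G RG X P1 P2" using L by (simp_all add: limit_span_def)
  obtain f1 where P1f: "P1 = (X, A, f1)" and f1: "(X, A, f1) \<in> Arr G" using Gamma_homE[OF P1] .
  obtain f2 where P2f: "P2 = (X, B, f2)" and f2: "(X, B, f2) \<in> Arr G" using Gamma_homE[OF P2] .
  obtain X' g1 g2 where g1: "(X', A, g1) \<in> Arr G" and g2: "(X', B, g2) \<in> Arr G"
    and L'_level: "\<And>i. i \<in> Obj I \<Longrightarrow> limit_span (C i) (R i) (fst A i) (fst B i) (fst X' i) (g1 i) (g2 i)"
    using Gamma_limit_span_exists by blast
  have L': "limit_span G RG A B X' (X', A, g1) (X', B, g2)"
    using Gamma_limit_span_of_levelwise[OF g1 g2 L'_level] .
  hence Q1: "(X', A, g1) \<in> hom G X' A" and Q2: "(X', B, g2) \<in> hom G X' B"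
    and RQ: "RG (X', A, g1) (X', B, g2)" and U': "universal_span G RG X' (X', A, g1) (X', B, g2)"
    by (simp_all add: limit_span_def)
  obtain H H' where H: "H \<in> hom G X' X" "H' \<in> hom G X X'" "Comp G H H' = Idm G X"
    "Comp G P1 H = (X', A, g1)" "Comp G P2 H = (X', B, g2)"
    by (rule Gamma.universal_span_comparison[OF U P1 P2 RP U' Q1 Q2 RQ])
  obtain h where Hh: "H = (X', X, h)" and h: "(X', X, h) \<in> Arr G" using Gamma_homE[OF H(1)] .
  obtain h' where Hh': "H' = (X, X', h')" and h': "(X, X', h') \<in> Arr G" using Gamma_homE[OF H(2)] .
  have "limit_span (C i) (R i) (fst A i) (fst B i) (fst X i) (f1 i) (f2 i)" if i: "i \<in> Obj I" for i
  proof -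
    have hh': "Comp (C i) (h i) (h' i) = Idm (C i) (fst X i)"
      using H(3) Hh Hh' i by (auto simp: Gamma_Idm dest: lw_eqD)
    have legs: "Comp (C i) (f1 i) (h i) = g1 i" "Comp (C i) (f2 i) (h i) = g2 i"
      using H(4,5) P1f P2f Hh i by (auto dest: lw_eqD)
    have "universal_span (C i) (R i) (fst X i) (f1 i) (f2 i)"
      using category.universal_span_retract[OF level[OF i] _ _ _ Gamma_obj_level[OF X i]
          Gamma_arr_level[OF f1 i] Gamma_arr_level[OF f2 i] Gamma_arr_level[OF h i]
          Gamma_arr_level[OF h' i] hh' legs] L'_level[OF i]
      by (simp add: limit_span_def)
    thus ?thesis
      using Gamma_obj_level[OF X i] Gamma_arr_level[OF f1 i] Gamma_arr_level[OF f2 i]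
        RG_iff[OF f1 f2] RP P1f P2f i by (simp add: limit_span_def)
  qed
  thus ?thesis using that P1f P2f f1 f2 by blast
qed

end

context diagram
begin

lemma Gamma_arr_transition:
  assumes a: "(X, Y, a) \<in> Arr G" and u: "u \<in> Arr I"
    and f: "f \<in> hom (C (Dom I u)) Z (fst X (Dom I u))"
  shows "Comp (C (Cod I u)) (a (Cod I u)) (Comp (C (Cod I u)) (snd X u) (Fm u f)) =
    Comp (C (Cod I u)) (snd Y u) (Fm u (Comp (C (Dom I u)) (a (Dom I u)) f))"
proof -
  have i: "Dom I u \<in> Obj I" and j: "Cod I u \<in> Obj I" using u dom_index cod_index by auto
  interpret Cj: category "C (Cod I u)" using level j .
  note ai = Gamma_arr_level[OF a i] and aj = Gamma_arr_level[OF a j]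
  note \<phi>X = Gamma_obj_comparison[OF Gamma_arr_dom[OF a] u]
    and \<phi>Y = Gamma_obj_comparison[OF Gamma_arr_cod[OF a] u]
  show ?thesis
    using Cj.comp_assoc[OF transition_hom[OF u f] \<phi>X aj] Gamma_arr_square[OF a u]
      Cj.comp_assoc[OF transition_hom[OF u f] transition_hom[OF u ai] \<phi>Y] transition_comp[OF u f ai]
    by simp
qed

lemma levelwise_limit_product:
  assumes A: "A \<in> Obj G" and B: "B \<in> Obj G"
    and ex: "\<And>i. i \<in> Obj I \<Longrightarrow> \<exists>X p1 p2. is_product (C i) (fst A i) (fst B i) X p1 p2"
  shows "levelwise_limit I C Fo Fm (\<lambda>_ _ _. True) (\<lambda>_ _. True) A B"
  by unfold_locales
    (use A B ex in \<open>simp_all add: is_product_iff_limit_span\<close>)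

lemma levelwise_limit_pullback:
  assumes a: "(A, D, a) \<in> Arr G" and b: "(B, D, b) \<in> Arr G"
    and ex: "\<And>i. i \<in> Obj I \<Longrightarrow> \<exists>Q q1 q2. is_pullback (C i) (a i) (b i) Q q1 q2"
  shows "levelwise_limit I C Fo Fm (\<lambda>i f g. Comp (C i) (a i) f = Comp (C i) (b i) g)
    (\<lambda>F H. Comp G (A, D, a) F = Comp G (B, D, b) H) A B"
proof unfold_locales
  show "A \<in> Obj G" "B \<in> Obj G" using Gamma_arr_dom[OF a] Gamma_arr_dom[OF b] .
next
  fix Z f g
  show "Comp G (A, D, a) (Z, A, f) = Comp G (B, D, b) (Z, B, g) \<longleftrightarrow>
      (\<forall>i\<in>Obj I. Comp (C i) (a i) (f i) = Comp (C i) (b i) (g i))"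
    by (simp add: lw_eq_iff)
next
  fix i Y Z h f g
  assume "i \<in> Obj I" "h \<in> hom (C i) Y Z" "f \<in> hom (C i) Z (fst A i)" "g \<in> hom (C i) Z (fst B i)"
    "Comp (C i) (a i) f = Comp (C i) (b i) g"
  thus "Comp (C i) (a i) (Comp (C i) f h) = Comp (C i) (b i) (Comp (C i) g h)"
    using category.comp_assoc[OF level] Gamma_arr_level[OF a] Gamma_arr_level[OF b] by metis
next
  fix u Z f g
  assume u: "u \<in> Arr I" and f: "f \<in> hom (C (Dom I u)) Z (fst A (Dom I u))"
    and g: "g \<in> hom (C (Dom I u)) Z (fst B (Dom I u))"
    and "Comp (C (Dom I u)) (a (Dom I u)) f = Comp (C (Dom I u)) (b (Dom I u)) g"
  thus "Comp (C (Cod I u)) (a (Cod I u)) (Comp (C (Cod I u)) (snd A u) (Fm u f)) =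
      Comp (C (Cod I u)) (b (Cod I u)) (Comp (C (Cod I u)) (snd B u) (Fm u g))"
    using Gamma_arr_transition[OF a u f] Gamma_arr_transition[OF b u g] by simp
next
  fix i assume i: "i \<in> Obj I"
  have "Dom (C i) (a i) = fst A i" "Dom (C i) (b i) = fst B i"
    using Gamma_arr_level[OF a i] Gamma_arr_level[OF b i] by (simp_all add: in_hom_iff)
  thus "\<exists>X p1 p2. limit_span (C i) (\<lambda>f g. Comp (C i) (a i) f = Comp (C i) (b i) g) (fst A i) (fst B i) X p1 p2"
    using ex[OF i] by (simp add: is_pullback_iff_limit_span)
qed

lemma Gamma_product_exists:
  assumes A: "A \<in> Obj G" and B: "B \<in> Obj G"
    and ex: "\<And>i. i \<in> Obj I \<Longrightarrow> \<exists>X p1 p2. is_product (C i) (fst A i) (fst B i) X p1 p2"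
  shows "\<exists>X P1 P2. is_product G A B X P1 P2"
  using levelwise_limit.Gamma_limit_span_exists[OF levelwise_limit_product[OF A B ex]]
    levelwise_limit.Gamma_limit_span_of_levelwise[OF levelwise_limit_product[OF A B ex]]
  unfolding is_product_iff_limit_span by blast

lemma Gamma_product_level:
  assumes ex: "\<And>i. i \<in> Obj I \<Longrightarrow> \<exists>X p1 p2. is_product (C i) (fst A i) (fst B i) X p1 p2"
    and P: "is_product G A B X P1 P2"
  obtains f1 f2 where "P1 = (X, A, f1)" "P2 = (X, B, f2)"
    "\<And>i. i \<in> Obj I \<Longrightarrow> is_product (C i) (fst A i) (fst B i) (fst X i) (f1 i) (f2 i)"
proof -
  have "P1 \<in> hom G X A" "P2 \<in> hom G X B" using P by (simp_all add: is_product_def)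
  hence "A \<in> Obj G" "B \<in> Obj G" by (simp_all add: Gamma.hom_cod)
  thus ?thesis
    using levelwise_limit.Gamma_limit_span_level[OF levelwise_limit_product[OF _ _ ex]] P that
    unfolding is_product_iff_limit_span by metis
qed

context
  fixes A B D :: "('i,'u,'o,'m) gobj" and a b :: "'i \<Rightarrow> 'm"
  assumes a: "(A, D, a) \<in> Arr G" and b: "(B, D, b) \<in> Arr G"
    and ex: "\<And>i. i \<in> Obj I \<Longrightarrow> \<exists>Q q1 q2. is_pullback (C i) (a i) (b i) Q q1 q2"
begin

lemma level_pullback_iff_limit_span:
  "i \<in> Obj I \<Longrightarrow> is_pullback (C i) (a i) (b i) X p1 p2 \<longleftrightarrow>
    limit_span (C i) (\<lambda>f g. Comp (C i) (a i) f = Comp (C i) (b i) g) (fst A i) (fst B i) X p1 p2"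
  using Gamma_arr_level[OF a] Gamma_arr_level[OF b]
  by (simp add: is_pullback_iff_limit_span in_hom_iff)

lemma Gamma_pullback_iff_limit_span:
  "is_pullback G (A, D, a) (B, D, b) Q P1 P2 \<longleftrightarrow>
    limit_span G (\<lambda>F H. Comp G (A, D, a) F = Comp G (B, D, b) H) A B Q P1 P2"
  using a b by (simp add: is_pullback_iff_limit_span)

lemma Gamma_pullback_exists: "\<exists>Q P1 P2. is_pullback G (A, D, a) (B, D, b) Q P1 P2"
  using levelwise_limit.Gamma_limit_span_exists[OF levelwise_limit_pullback[OF a b ex]]
    levelwise_limit.Gamma_limit_span_of_levelwise[OF levelwise_limit_pullback[OF a b ex]]
  unfolding Gamma_pullback_iff_limit_span by blast

lemma Gamma_pullback_of_levelwise:
  assumes "(Q, A, f1) \<in> Arr G" "(Q, B, f2) \<in> Arr G"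
    and "\<And>i. i \<in> Obj I \<Longrightarrow> is_pullback (C i) (a i) (b i) (fst Q i) (f1 i) (f2 i)"
  shows "is_pullback G (A, D, a) (B, D, b) Q (Q, A, f1) (Q, B, f2)"
  using levelwise_limit.Gamma_limit_span_of_levelwise[OF levelwise_limit_pullback[OF a b ex] assms(1,2)]
    assms(3) level_pullback_iff_limit_span Gamma_pullback_iff_limit_span by simp

lemma Gamma_pullback_level:
  assumes "is_pullback G (A, D, a) (B, D, b) Q P1 P2"
  obtains f1 f2 where "P1 = (Q, A, f1)" "P2 = (Q, B, f2)" "(Q, A, f1) \<in> Arr G" "(Q, B, f2) \<in> Arr G"
    "\<And>i. i \<in> Obj I \<Longrightarrow> is_pullback (C i) (a i) (b i) (fst Q i) (f1 i) (f2 i)"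
  using levelwise_limit.Gamma_limit_span_level[OF levelwise_limit_pullback[OF a b ex]]
    assms level_pullback_iff_limit_span that unfolding Gamma_pullback_iff_limit_span by metis

end

end

section \<open>Level-wise endofunctors and classes of arrows\<close>

locale levelwise_endofunctor = diagram I C Fo Fm
  for I :: "('i,'u) cat" and C :: "'i \<Rightarrow> ('o,'m) cat"
    and Fo :: "'u \<Rightarrow> 'o \<Rightarrow> 'o" and Fm :: "'u \<Rightarrow> 'm \<Rightarrow> 'm" +
  fixes FX :: "('i,'u,'o,'m) gobj \<Rightarrow> ('i,'u,'o,'m) gobj"
    and FmX :: "('i,'u,'o,'m) gmor \<Rightarrow> ('i,'u,'o,'m) gmor"
    and FO :: "'i \<Rightarrow> 'o \<Rightarrow> 'o" and FM :: "'i \<Rightarrow> 'm \<Rightarrow> 'm"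
  assumes level_functor: "\<And>i. i \<in> Obj I \<Longrightarrow> is_functor (C i) (C i) (FO i) (FM i)"
    and transition_obj_commute: "\<And>u A. u \<in> Arr I \<Longrightarrow> A \<in> Obj (C (Dom I u)) \<Longrightarrow>
      Fo u (FO (Dom I u) A) = FO (Cod I u) (Fo u A)"
    and transition_arr_commute: "\<And>u f. u \<in> Arr I \<Longrightarrow> f \<in> Arr (C (Dom I u)) \<Longrightarrow>
      Fm u (FM (Dom I u) f) = FM (Cod I u) (Fm u f)"
    and obj: "\<And>X. X \<in> Obj G \<Longrightarrow> FX X \<in> Obj G"
    and obj_level: "\<And>X i. X \<in> Obj G \<Longrightarrow> i \<in> Obj I \<Longrightarrow> fst (FX X) i = FO i (fst X i)"
    and obj_comparison: "\<And>X u. X \<in> Obj G \<Longrightarrow> u \<in> Arr I \<Longrightarrow> snd (FX X) u = FM (Cod I u) (snd X u)"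
    and arr: "\<And>X Y f. (X, Y, f) \<in> Arr G \<Longrightarrow> FmX (X, Y, f) = (FX X, FX Y, lw (Obj I) (\<lambda>i. FM i (f i)))"
begin

lemma arr_in_Gamma:
  assumes f: "(X, Y, f) \<in> Arr G"
  shows "(FX X, FX Y, lw (Obj I) (\<lambda>i. FM i (f i))) \<in> Arr G"
proof (rule Gamma_arrI)
  have X: "X \<in> Obj G" and Y: "Y \<in> Obj G" using Gamma_arr_dom[OF f] Gamma_arr_cod[OF f] .
  thus "FX X \<in> Obj G" "FX Y \<in> Obj G" by (simp_all add: obj)
  fix i assume i: "i \<in> Obj I"
  show "lw (Obj I) (\<lambda>i. FM i (f i)) i \<in> hom (C i) (fst (FX X) i) (fst (FX Y) i)"
    using i X Y functor_hom[OF level_functor[OF i] Gamma_arr_level[OF f i]] by (simp add: obj_level)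
next
  fix u assume u: "u \<in> Arr I"
  let ?i = "Dom I u" and ?j = "Cod I u"
  have i: "?i \<in> Obj I" and j: "?j \<in> Obj I" using dom_index cod_index u by auto
  have X: "X \<in> Obj G" and Y: "Y \<in> Obj G" using Gamma_arr_dom[OF f] Gamma_arr_cod[OF f] .
  note F = level_functor[OF j] and fi = Gamma_arr_level[OF f i] and fj = Gamma_arr_level[OF f j]
  have "Comp (C ?j) (FM ?j (f ?j)) (FM ?j (snd X u)) = FM ?j (Comp (C ?j) (snd Y u) (Fm u (f ?i)))"
    using functor_comp[OF F Gamma_obj_comparison[OF X u] fj] Gamma_arr_square[OF f u] by simp
  also have "\<dots> = Comp (C ?j) (FM ?j (snd Y u)) (Fm u (FM ?i (f ?i)))"
    using functor_comp[OF F transition_hom[OF u fi] Gamma_obj_comparison[OF Y u]]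
      transition_arr_commute[OF u] fi by (simp add: in_hom_iff)
  finally show "Comp (C ?j) (lw (Obj I) (\<lambda>i. FM i (f i)) ?j) (snd (FX X) u) =
      Comp (C ?j) (snd (FX Y) u) (Fm u (lw (Obj I) (\<lambda>i. FM i (f i)) ?i))"
    using X Y u i j by (simp add: obj_comparison)
qed simp

lemma Gamma_functor: "is_functor G G FX FmX"
  unfolding is_functor_def
proof (intro conjI ballI allI impI)
  fix X assume "X \<in> Obj G" thus "FX X \<in> Obj G" by (rule obj)
next
  fix F assume "F \<in> Arr G"
  thus "FmX F \<in> hom G (FX (Dom G F)) (FX (Cod G F))"
    using arr_in_Gamma arr by (cases F) (simp add: in_hom_iff)
next
  fix X assume X: "X \<in> Obj G"
  have "lw (Obj I) (\<lambda>i. FM i (lw (Obj I) (\<lambda>i. Idm (C i) (fst X i)) i)) =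
      lw (Obj I) (\<lambda>i. Idm (C i) (fst (FX X) i))"
    using functor_id[OF level_functor Gamma_obj_level[OF X]] obj_level[OF X] by (intro lw_cong) simp
  thus "FmX (Idm G X) = Idm G (FX X)"
    using arr Gamma.id_hom[OF X] by (simp add: Gamma_Idm in_hom_iff)
next
  fix F H assume FH: "F \<in> Arr G \<and> H \<in> Arr G \<and> Cod G F = Dom G H"
  obtain X Y f where Ff: "F = (X, Y, f)" by (cases F)
  obtain Y' Z g where Hg: "H = (Y', Z, g)" by (cases H)
  have f: "(X, Y, f) \<in> Arr G" and g: "(Y, Z, g) \<in> Arr G" using FH Ff Hg by auto
  have "lw (Obj I) (\<lambda>i. FM i (lw (Obj I) (\<lambda>i. Comp (C i) (g i) (f i)) i)) =
      lw (Obj I) (\<lambda>i. Comp (C i) (FM i (g i)) (FM i (f i)))"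
    using functor_comp[OF level_functor Gamma_arr_level[OF f] Gamma_arr_level[OF g]] by (intro lw_cong) simp
  thus "FmX (Comp G H F) = Comp G (FmX H) (FmX F)"
    using Ff Hg FH arr f g Gamma_comp_arr[OF f g] by simp
qed

lemma Gamma_nat_trans:
  assumes target: "levelwise_endofunctor I C Fo Fm GX GmX GO GM"
    and level_nat: "\<And>i. i \<in> Obj I \<Longrightarrow> nat_trans (C i) (FO i) (FM i) (GO i) (GM i) (\<sigma> i)"
    and transition_commute: "\<And>u A. u \<in> Arr I \<Longrightarrow> A \<in> Obj (C (Dom I u)) \<Longrightarrow>
      Fm u (\<sigma> (Dom I u) A) = \<sigma> (Cod I u) (Fo u A)"
    and \<eta>: "\<And>X. X \<in> Obj G \<Longrightarrow> \<eta> X = (FX X, GX X, lw (Obj I) (\<lambda>i. \<sigma> i (fst X i)))"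
  shows "nat_trans G FX FmX GX GmX \<eta>"
  unfolding nat_trans_def
proof (intro conjI ballI)
  interpret T: levelwise_endofunctor I C Fo Fm GX GmX GO GM using target .
  fix X assume X: "X \<in> Obj G"
  have "(FX X, GX X, lw (Obj I) (\<lambda>i. \<sigma> i (fst X i))) \<in> Arr G"
  proof (rule Gamma_arrI[OF obj[OF X] T.obj[OF X]])
    fix i assume i: "i \<in> Obj I"
    show "lw (Obj I) (\<lambda>i. \<sigma> i (fst X i)) i \<in> hom (C i) (fst (FX X) i) (fst (GX X) i)"
      using i obj_level[OF X i] T.obj_level[OF X i] nat_trans_hom[OF level_nat[OF i] Gamma_obj_level[OF X i]]
      by simp
  next
    fix u assume u: "u \<in> Arr I"
    let ?i = "Dom I u" and ?j = "Cod I u"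
    have i: "?i \<in> Obj I" and j: "?j \<in> Obj I" using dom_index cod_index u by auto
    have "Comp (C ?j) (\<sigma> ?j (fst X ?j)) (FM ?j (snd X u)) = Comp (C ?j) (GM ?j (snd X u)) (\<sigma> ?j (Fo u (fst X ?i)))"
      using nat_trans_naturality[OF level_nat[OF j] Gamma_obj_comparison[OF X u]] by simp
    thus "Comp (C ?j) (lw (Obj I) (\<lambda>i. \<sigma> i (fst X i)) ?j) (snd (FX X) u) =
        Comp (C ?j) (snd (GX X) u) (Fm u (lw (Obj I) (\<lambda>i. \<sigma> i (fst X i)) ?i))"
      using X u i j transition_commute[OF u Gamma_obj_level[OF X i]] obj_comparison T.obj_comparison by simp
  qed simp
  thus "\<eta> X \<in> hom G (FX X) (GX X)" using \<eta>[OF X] by (simp add: in_hom_iff)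
next
  interpret T: levelwise_endofunctor I C Fo Fm GX GmX GO GM using target .
  fix F assume F: "F \<in> Arr G"
  obtain X Y f where Ff: "F = (X, Y, f)" by (cases F)
  have f: "(X, Y, f) \<in> Arr G" using F Ff by simp
  have "lw (Obj I) (\<lambda>i. Comp (C i) (GM i (f i)) (\<sigma> i (fst X i))) =
      lw (Obj I) (\<lambda>i. Comp (C i) (\<sigma> i (fst Y i)) (FM i (f i)))"
    using nat_trans_naturality[OF level_nat Gamma_arr_level[OF f]] by (intro lw_cong) simp
  thus "Comp G (GmX F) (\<eta> (Dom G F)) = Comp G (\<eta> (Cod G F)) (FmX F)"
    using Ff f \<eta>[OF Gamma_arr_dom[OF f]] \<eta>[OF Gamma_arr_cod[OF f]] arr T.arr by simp
qed

lemma compose: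
  assumes "levelwise_endofunctor I C Fo Fm GX GmX GO GM"
  shows "levelwise_endofunctor I C Fo Fm (\<lambda>X. GX (FX X)) (\<lambda>F. GmX (FmX F))
    (\<lambda>i A. GO i (FO i A)) (\<lambda>i f. GM i (FM i f))"
proof -
  interpret T: levelwise_endofunctor I C Fo Fm GX GmX GO GM using assms .
  show ?thesis
  proof unfold_locales
    fix i assume i: "i \<in> Obj I"
    note F = level_functor[OF i] and H = T.level_functor[OF i]
    show "is_functor (C i) (C i) (\<lambda>A. GO i (FO i A)) (\<lambda>f. GM i (FM i f))"
      unfolding is_functor_def
      using functor_obj[OF H functor_obj[OF F]] functor_hom[OF H functor_hom[OF F]]
        functor_id[OF H functor_obj[OF F]] functor_id[OF F]
        functor_comp[OF H functor_hom[OF F] functor_hom[OF F]] functor_comp[OF F]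
      by (simp add: in_hom_iff)
  next
    fix u A assume u: "u \<in> Arr I" and A: "A \<in> Obj (C (Dom I u))"
    show "Fo u (GO (Dom I u) (FO (Dom I u) A)) = GO (Cod I u) (FO (Cod I u) (Fo u A))"
      using transition_obj_commute[OF u A] T.transition_obj_commute[OF u]
        functor_obj[OF level_functor[OF dom_index[OF u]] A] by simp
  next
    fix u f assume u: "u \<in> Arr I" and f: "f \<in> Arr (C (Dom I u))"
    have "FM (Dom I u) f \<in> Arr (C (Dom I u))"
      using functor_hom[OF level_functor[OF dom_index[OF u]], of f] f by (simp add: in_hom_iff)
    thus "Fm u (GM (Dom I u) (FM (Dom I u) f)) = GM (Cod I u) (FM (Cod I u) (Fm u f))"
      using transition_arr_commute[OF u f] T.transition_arr_commute[OF u] by simp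
  next
    fix X Y f assume "(X, Y, f) \<in> Arr G"
    thus "GmX (FmX (X, Y, f)) = (GX (FX X), GX (FX Y), lw (Obj I) (\<lambda>i. GM i (FM i (f i))))"
      using arr T.arr[OF arr_in_Gamma] by simp
  qed (simp_all add: obj T.obj obj_level T.obj_level obj_comparison T.obj_comparison)
qed

end

context diagram
begin

lemma levelwise_endofunctor_id: "levelwise_endofunctor I C Fo Fm id id (\<lambda>i. id) (\<lambda>i. id)"
proof unfold_locales
  fix i assume "i \<in> Obj I"
  thus "is_functor (C i) (C i) id id"
    using level_category unfolding is_functor_def is_category_def in_hom_iff by simp
qed (simp_all add: Gamma_arr_lw)

definition levelwise_class :: "('i \<Rightarrow> 'm set) \<Rightarrow> ('i,'u,'o,'m) gmor set" where
  "levelwise_class K = {F \<in> Arr G. \<forall>i\<in>Obj I. snd (snd F) i \<in> K i}"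

lemma levelwise_class_iff [simp]:
  "(X, Y, f) \<in> levelwise_class K \<longleftrightarrow> (X, Y, f) \<in> Arr G \<and> (\<forall>i\<in>Obj I. f i \<in> K i)"
  by (simp add: levelwise_class_def)

lemma levelwise_class_iso:
  assumes K: "\<And>i f. i \<in> Obj I \<Longrightarrow> is_iso (C i) f \<Longrightarrow> f \<in> K i" and iso: "is_iso G F"
  shows "F \<in> levelwise_class K"
proof -
  obtain X Y f where Ff: "F = (X, Y, f)" by (cases F)
  have "(X, Y, f) \<in> Arr G" using iso Ff by (simp add: is_iso_def)
  thus ?thesis using K Gamma_iso_level iso Ff by simp
qed

lemma levelwise_class_comp:
  assumes K: "\<And>i f g. i \<in> Obj I \<Longrightarrow> f \<in> K i \<Longrightarrow> g \<in> K i \<Longrightarrow> Cod (C i) f = Dom (C i) g \<Longrightarrow>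
      Comp (C i) g f \<in> K i"
    and F: "F \<in> levelwise_class K" and H: "H \<in> levelwise_class K" and FH: "Cod G F = Dom G H"
  shows "Comp G H F \<in> levelwise_class K"
proof -
  obtain X Y f where Ff: "F = (X, Y, f)" by (cases F)
  obtain Z g where Hg: "H = (Y, Z, g)" using FH Ff by (cases H) simp
  have f: "(X, Y, f) \<in> Arr G" and g: "(Y, Z, g) \<in> Arr G" using F H Ff Hg by simp_all
  have "Comp (C i) (g i) (f i) \<in> K i" if i: "i \<in> Obj I" for i
    using K[OF i] F H Ff Hg i Gamma_arr_level[OF f i] Gamma_arr_level[OF g i] by (simp add: in_hom_iff)
  thus ?thesis using Gamma_comp_arr[OF f g] Ff Hg by simp
qed

lemma levelwise_class_2_of_3:
  assumes K: "\<And>i f g. i \<in> Obj I \<Longrightarrow> f \<in> Arr (C i) \<Longrightarrow> g \<in> Arr (C i) \<Longrightarrow> Cod (C i) f = Dom (C i) g \<Longrightarrow>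
      (f \<in> K i \<and> Comp (C i) g f \<in> K i \<longrightarrow> g \<in> K i) \<and> (g \<in> K i \<and> Comp (C i) g f \<in> K i \<longrightarrow> f \<in> K i)"
    and F: "F \<in> Arr G" and H: "H \<in> Arr G" and FH: "Cod G F = Dom G H"
  shows "(F \<in> levelwise_class K \<and> Comp G H F \<in> levelwise_class K \<longrightarrow> H \<in> levelwise_class K) \<and>
    (H \<in> levelwise_class K \<and> Comp G H F \<in> levelwise_class K \<longrightarrow> F \<in> levelwise_class K)"
proof -
  obtain X Y f where Ff: "F = (X, Y, f)" by (cases F)
  obtain Z g where Hg: "H = (Y, Z, g)" using FH Ff by (cases H) simp
  have f: "(X, Y, f) \<in> Arr G" and g: "(Y, Z, g) \<in> Arr G" using F H Ff Hg by simp_all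
  have "(f i \<in> K i \<and> Comp (C i) (g i) (f i) \<in> K i \<longrightarrow> g i \<in> K i) \<and>
      (g i \<in> K i \<and> Comp (C i) (g i) (f i) \<in> K i \<longrightarrow> f i \<in> K i)" if i: "i \<in> Obj I" for i
    using K[OF i, of "f i" "g i"] Gamma_arr_level[OF f i] Gamma_arr_level[OF g i] by (simp add: in_hom_iff)
  thus ?thesis using Gamma_comp_arr[OF f g] f g Ff Hg by auto
qed

end

section \<open>The P-structure of the diagram category\<close>

locale Gamma_Pcat = diagram I C Fo Fm
  for I :: "('i,'u) cat" and C :: "'i \<Rightarrow> ('o,'m) cat"
    and Fo :: "'u \<Rightarrow> 'o \<Rightarrow> 'o" and Fm :: "'u \<Rightarrow> 'm \<Rightarrow> 'm" +
  fixes S :: "'i \<Rightarrow> ('o,'m) pstruct"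
  assumes level_Pcat: "\<And>i. i \<in> Obj I \<Longrightarrow> is_Pcat (C i) (S i)"
    and transition_paths: "\<And>u. u \<in> Arr I \<Longrightarrow>
      preserves_paths (C (Dom I u)) (S (Dom I u)) (S (Cod I u)) (Fo u) (Fm u)"
begin

abbreviation GP where "GP \<equiv> Gamma_P I C Fo Fm S"

lemma
  assumes u: "u \<in> Arr I" and A: "A \<in> Obj (C (Dom I u))"
  shows transition_PO: "Fo u (PO (S (Dom I u)) A) = PO (S (Cod I u)) (Fo u A)"
    and transition_iota: "Fm u (iota (S (Dom I u)) A) = iota (S (Cod I u)) (Fo u A)"
    and transition_dl0: "Fm u (dl0 (S (Dom I u)) A) = dl0 (S (Cod I u)) (Fo u A)"
    and transition_dl1: "Fm u (dl1 (S (Dom I u)) A) = dl1 (S (Cod I u)) (Fo u A)"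
    and transition_tau: "Fm u (tau (S (Dom I u)) A) = tau (S (Cod I u)) (Fo u A)"
    and transition_cc: "Fm u (cc (S (Dom I u)) A) = cc (S (Cod I u)) (Fo u A)"
    and transition_mu: "Fm u (mu (S (Dom I u)) A) = mu (S (Cod I u)) (Fo u A)"
    and transition_nabla: "Fm u (nabla (S (Dom I u)) A) = nabla (S (Cod I u)) (Fo u A)"
  using transition_paths[OF u] A unfolding preserves_paths_def by blast+

lemma transition_PM: "u \<in> Arr I \<Longrightarrow> f \<in> Arr (C (Dom I u)) \<Longrightarrow>
    Fm u (PM (S (Dom I u)) f) = PM (S (Cod I u)) (Fm u f)"
  using transition_paths unfolding preserves_paths_def by blast

lemma gP_obj_fst [simp]: "i \<in> Obj I \<Longrightarrow> fst (gP_obj I S X) i = PO (S i) (fst X i)"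
  and gP_obj_snd [simp]: "u \<in> Arr I \<Longrightarrow> snd (gP_obj I S X) u = PM (S (Cod I u)) (snd X u)"
  by (simp_all add: gP_obj_def)

lemma Gamma_P_simps:
  "PO GP = gP_obj I S"
  "PM GP (X, Y, f) = (gP_obj I S X, gP_obj I S Y, lw (Obj I) (\<lambda>i. PM (S i) (f i)))"
  "iota GP X = (X, gP_obj I S X, lw (Obj I) (\<lambda>i. iota (S i) (fst X i)))"
  "dl0 GP X = (gP_obj I S X, X, lw (Obj I) (\<lambda>i. dl0 (S i) (fst X i)))"
  "dl1 GP X = (gP_obj I S X, X, lw (Obj I) (\<lambda>i. dl1 (S i) (fst X i)))"
  "tau GP X = (gP_obj I S X, gP_obj I S X, lw (Obj I) (\<lambda>i. tau (S i) (fst X i)))"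
  "cc GP X = (gP_obj I S X, gP_obj I S (gP_obj I S X), lw (Obj I) (\<lambda>i. cc (S i) (fst X i)))"
  "mu GP X = (gP_obj I S (gP_obj I S X), gP_obj I S (gP_obj I S X), lw (Obj I) (\<lambda>i. mu (S i) (fst X i)))"
  "nabla GP X = (gP_obj I S (gP_obj I S X), gP_obj I S X, lw (Obj I) (\<lambda>i. nabla (S i) (fst X i)))"
  "Fib GP = levelwise_class (\<lambda>i. Fib (S i))"
  "WE GP = levelwise_class (\<lambda>i. WE (S i))"
  by (simp_all add: Gamma_P_def Let_def levelwise_class_def Gamma_Arr)

lemma gP_obj_in_Gamma: assumes X: "X \<in> Obj G" shows "gP_obj I S X \<in> Obj G"
  unfolding gP_obj_def
proof (rule Gamma_objI)
  fix u assume u: "u \<in> Arr I"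
  show "lw (Arr I) (\<lambda>u. PM (S (Cod I u)) (snd X u)) u \<in> hom (C (Cod I u))
      (Fo u (lw (Obj I) (\<lambda>i. PO (S i) (fst X i)) (Dom I u))) (lw (Obj I) (\<lambda>i. PO (S i) (fst X i)) (Cod I u))"
    using u dom_index cod_index transition_PO[OF u Gamma_obj_level[OF X dom_index[OF u]]]
      functor_hom[OF Pcat_path_functor[OF level_Pcat[OF cod_index[OF u]]] Gamma_obj_comparison[OF X u]]
    by simp
qed (use Gamma_obj_level[OF X] functor_obj[OF Pcat_path_functor[OF level_Pcat]] in simp_all)

lemma levelwise_endofunctor_P:
  "levelwise_endofunctor I C Fo Fm (PO GP) (PM GP) (\<lambda>i. PO (S i)) (\<lambda>i. PM (S i))"
  by unfold_locales
    (simp_all add: Gamma_P_simps gP_obj_in_Gamma Pcat_path_functor[OF level_Pcat] transition_PO transition_PM)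

lemma levelwise_endofunctor_PP:
  "levelwise_endofunctor I C Fo Fm (\<lambda>X. PO GP (PO GP X)) (\<lambda>F. PM GP (PM GP F))
    (\<lambda>i A. PO (S i) (PO (S i) A)) (\<lambda>i f. PM (S i) (PM (S i) f))"
  using levelwise_endofunctor.compose[OF levelwise_endofunctor_P levelwise_endofunctor_P] .

lemma Gamma_finite_products: "has_finite_products G"
  unfolding has_finite_products_def
proof (intro conjI ballI)
  have "\<exists>e. is_terminal (C i) e" if "i \<in> Obj I" for i
    using Pcat_finite_products[OF level_Pcat[OF that]] by (simp add: has_finite_products_def)
  thus "\<exists>e. is_terminal G e" using Gamma_terminal_exists by blast
  fix A B assume A: "A \<in> Obj G" and B: "B \<in> Obj G"
  show "\<exists>X p1 p2. is_product G A B X p1 p2"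
    by (rule Gamma_product_exists[OF A B])
      (use Pcat_finite_products[OF level_Pcat] Gamma_obj_level[OF A] Gamma_obj_level[OF B]
        in \<open>auto simp: has_finite_products_def\<close>)
qed

lemma Gamma_path_functor: "is_functor G G (PO GP) (PM GP)"
  using levelwise_endofunctor.Gamma_functor[OF levelwise_endofunctor_P] .

lemma Gamma_iota_nat: "nat_trans G id id (PO GP) (PM GP) (iota GP)"
  by (rule levelwise_endofunctor.Gamma_nat_trans[OF levelwise_endofunctor_id levelwise_endofunctor_P])
    (simp_all add: Pcat_iota_nat[OF level_Pcat] transition_iota Gamma_P_simps)

lemma Gamma_dl0_nat: "nat_trans G (PO GP) (PM GP) id id (dl0 GP)"
  and Gamma_dl1_nat: "nat_trans G (PO GP) (PM GP) id id (dl1 GP)"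
  by (rule levelwise_endofunctor.Gamma_nat_trans[OF levelwise_endofunctor_P levelwise_endofunctor_id];
      simp add: Pcat_dl0_nat[OF level_Pcat] Pcat_dl1_nat[OF level_Pcat] transition_dl0 transition_dl1
        Gamma_P_simps)+

lemma Gamma_tau_nat: "nat_trans G (PO GP) (PM GP) (PO GP) (PM GP) (tau GP)"
  by (rule levelwise_endofunctor.Gamma_nat_trans[OF levelwise_endofunctor_P levelwise_endofunctor_P])
    (simp_all add: Pcat_tau_nat[OF level_Pcat] transition_tau Gamma_P_simps)

lemma Gamma_cc_nat:
  "nat_trans G (PO GP) (PM GP) (\<lambda>A. PO GP (PO GP A)) (\<lambda>f. PM GP (PM GP f)) (cc GP)"
  by (rule levelwise_endofunctor.Gamma_nat_trans[OF levelwise_endofunctor_P levelwise_endofunctor_PP])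
    (simp_all add: Pcat_cc_nat[OF level_Pcat] transition_cc Gamma_P_simps)

lemma Gamma_mu_nat: "nat_trans G (\<lambda>A. PO GP (PO GP A)) (\<lambda>f. PM GP (PM GP f))
    (\<lambda>A. PO GP (PO GP A)) (\<lambda>f. PM GP (PM GP f)) (mu GP)"
  by (rule levelwise_endofunctor.Gamma_nat_trans[OF levelwise_endofunctor_PP levelwise_endofunctor_PP])
    (simp_all add: Pcat_mu_nat[OF level_Pcat] transition_mu Gamma_P_simps)

lemma Gamma_nabla_nat:
  "nat_trans G (\<lambda>A. PO GP (PO GP A)) (\<lambda>f. PM GP (PM GP f)) (PO GP) (PM GP) (nabla GP)"
  by (rule levelwise_endofunctor.Gamma_nat_trans[OF levelwise_endofunctor_PP levelwise_endofunctor_P])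
    (simp_all add: Pcat_nabla_nat[OF level_Pcat] transition_nabla Gamma_P_simps)

lemma Gamma_iota_eqs: "\<forall>A\<in>Obj G. Comp G (dl0 GP A) (iota GP A) = Idm G A \<and>
    Comp G (dl1 GP A) (iota GP A) = Idm G A"
  by (simp add: Gamma_P_simps Gamma_Idm Pcat_iota_eqs[OF level_Pcat, rule_format] Gamma_obj_level)

lemma Gamma_tau_eqs: "\<forall>A\<in>Obj G. Comp G (tau GP A) (tau GP A) = Idm G (PO GP A) \<and>
    Comp G (tau GP A) (iota GP A) = iota GP A \<and>
    Comp G (dl0 GP A) (tau GP A) = dl1 GP A \<and> Comp G (dl1 GP A) (tau GP A) = dl0 GP A"
  by (simp add: Gamma_P_simps Gamma_Idm Pcat_tau_eqs[OF level_Pcat, rule_format] Gamma_obj_level)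

lemma Gamma_cc_eqs: "\<forall>A\<in>Obj G.
    Comp G (cc GP (PO GP A)) (cc GP A) = Comp G (PM GP (cc GP A)) (cc GP A) \<and>
    Comp G (dl1 GP (PO GP A)) (cc GP A) = Idm G (PO GP A) \<and>
    Comp G (PM GP (dl1 GP A)) (cc GP A) = Idm G (PO GP A) \<and>
    Comp G (cc GP A) (iota GP A) = Comp G (iota GP (PO GP A)) (iota GP A) \<and>
    Comp G (dl0 GP (PO GP A)) (cc GP A) = Comp G (iota GP A) (dl0 GP A) \<and>
    Comp G (PM GP (dl0 GP A)) (cc GP A) = Comp G (iota GP A) (dl0 GP A)"
  by (simp add: Gamma_P_simps Gamma_Idm Pcat_cc_eqs[OF level_Pcat, rule_format] Gamma_obj_level)

lemma Gamma_mu_eqs: "\<forall>A\<in>Obj G. is_iso G (mu GP A) \<and>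
    Comp G (dl0 GP (PO GP A)) (mu GP A) = PM GP (dl0 GP A) \<and>
    Comp G (dl1 GP (PO GP A)) (mu GP A) = PM GP (dl1 GP A) \<and>
    Comp G (PM GP (dl0 GP A)) (mu GP A) = dl0 GP (PO GP A) \<and>
    Comp G (PM GP (dl1 GP A)) (mu GP A) = dl1 GP (PO GP A)"
proof (intro ballI conjI)
  fix A assume A: "A \<in> Obj G"
  have "mu GP A \<in> Arr G" using nat_trans_hom[OF Gamma_mu_nat A] by (simp add: in_hom_iff)
  thus "is_iso G (mu GP A)"
    unfolding Gamma_P_simps
    by (rule Gamma_iso_of_levelwise) (simp add: Pcat_mu_eqs[OF level_Pcat, rule_format] Gamma_obj_level[OF A])
qed (simp_all add: Gamma_P_simps Pcat_mu_eqs[OF level_Pcat, rule_format] Gamma_obj_level)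

lemma Gamma_nabla_eqs: "\<forall>A\<in>Obj G.
    Comp G (dl0 GP A) (nabla GP A) = Comp G (dl0 GP A) (dl0 GP (PO GP A)) \<and>
    Comp G (dl1 GP A) (nabla GP A) = Comp G (dl1 GP A) (dl1 GP (PO GP A)) \<and>
    Comp G (nabla GP A) (iota GP (PO GP A)) = Idm G (PO GP A)"
  by (simp add: Gamma_P_simps Gamma_Idm Pcat_nabla_eqs[OF level_Pcat, rule_format] Gamma_obj_level)

lemma Gamma_fib_arr: "Fib GP \<subseteq> Arr G"
  and Gamma_we_arr: "WE GP \<subseteq> Arr G"
  by (auto simp: Gamma_P_simps levelwise_class_def)

lemma Gamma_iso: "\<forall>f. is_iso G f \<longrightarrow> f \<in> Fib GP \<and> f \<in> WE GP"
  using levelwise_class_iso Pcat_iso[OF level_Pcat] by (simp add: Gamma_P_simps)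

lemma Gamma_fib_comp: "\<forall>f g. f \<in> Fib GP \<and> g \<in> Fib GP \<and> Cod G f = Dom G g \<longrightarrow> Comp G g f \<in> Fib GP"
  using levelwise_class_comp Pcat_fib_comp[OF level_Pcat] by (simp add: Gamma_P_simps)

lemma Gamma_we_comp: "\<forall>f g. f \<in> WE GP \<and> g \<in> WE GP \<and> Cod G f = Dom G g \<longrightarrow> Comp G g f \<in> WE GP"
  using levelwise_class_comp Pcat_we_comp[OF level_Pcat] by (simp add: Gamma_P_simps)

lemma Gamma_we_2_of_3: "\<forall>f g. f \<in> Arr G \<and> g \<in> Arr G \<and> Cod G f = Dom G g \<longrightarrow>
    (f \<in> WE GP \<and> Comp G g f \<in> WE GP \<longrightarrow> g \<in> WE GP) \<and>
    (g \<in> WE GP \<and> Comp G g f \<in> WE GP \<longrightarrow> f \<in> WE GP)"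
proof (intro allI impI)
  fix f g assume "f \<in> Arr G \<and> g \<in> Arr G \<and> Cod G f = Dom G g"
  thus "(f \<in> WE GP \<and> Comp G g f \<in> WE GP \<longrightarrow> g \<in> WE GP) \<and>
      (g \<in> WE GP \<and> Comp G g f \<in> WE GP \<longrightarrow> f \<in> WE GP)"
    unfolding Gamma_P_simps
    by (intro levelwise_class_2_of_3) (use Pcat_we_2_of_3[OF level_Pcat] in blast)+
qed

lemma Gamma_terminal_fib: "\<forall>e. is_terminal G e \<longrightarrow> (\<forall>A\<in>Obj G. \<forall>t\<in>hom G A e. t \<in> Fib GP)"
proof (intro allI impI ballI)
  fix e A T assume e: "is_terminal G e" and A: "A \<in> Obj G" and T: "T \<in> hom G A e"
  obtain t where Tt: "T = (A, e, t)" and t: "(A, e, t) \<in> Arr G" using Gamma_homE[OF T] .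
  have "\<exists>e. is_terminal (C i) e" if "i \<in> Obj I" for i
    using Pcat_finite_products[OF level_Pcat[OF that]] by (simp add: has_finite_products_def)
  hence "t i \<in> Fib (S i)" if i: "i \<in> Obj I" for i
    using Pcat_terminal_fib[OF level_Pcat[OF i]] Gamma_terminal_level[OF _ e i]
      Gamma_obj_level[OF A i] Gamma_arr_level[OF t i] by blast
  thus "T \<in> Fib GP" using Tt t by (simp add: Gamma_P_simps)
qed

lemma level_products_exist: "i \<in> Obj I \<Longrightarrow> A \<in> Obj G \<Longrightarrow> B \<in> Obj G \<Longrightarrow>
    \<exists>X p1 p2. is_product (C i) (fst A i) (fst B i) X p1 p2"
  using Pcat_finite_products[OF level_Pcat] Gamma_obj_level by (simp add: has_finite_products_def)

lemma Gamma_P2: "\<forall>A\<in>Obj G. iota GP A \<in> WE GP \<and>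
    dl0 GP A \<in> Fib GP \<and> dl0 GP A \<in> WE GP \<and> dl1 GP A \<in> Fib GP \<and> dl1 GP A \<in> WE GP \<and>
    (\<forall>X p1 p2. is_product G A A X p1 p2 \<longrightarrow>
       (\<forall>h\<in>hom G (PO GP A) X. Comp G p1 h = dl0 GP A \<and> Comp G p2 h = dl1 GP A \<longrightarrow> h \<in> Fib GP))"
proof (intro ballI conjI allI impI)
  fix A assume A: "A \<in> Obj G"
  have "iota GP A \<in> Arr G" "dl0 GP A \<in> Arr G" "dl1 GP A \<in> Arr G"
    using nat_trans_hom[OF Gamma_iota_nat A] nat_trans_hom[OF Gamma_dl0_nat A]
      nat_trans_hom[OF Gamma_dl1_nat A] by (simp_all add: in_hom_iff)
  thus "iota GP A \<in> WE GP" "dl0 GP A \<in> Fib GP" "dl0 GP A \<in> WE GP" "dl1 GP A \<in> Fib GP" "dl1 GP A \<in> WE GP"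
    using Pcat_P2[OF level_Pcat] Gamma_obj_level[OF A] by (simp_all add: Gamma_P_simps)
  fix X P1 P2 H assume P: "is_product G A A X P1 P2" and H: "H \<in> hom G (PO GP A) X"
    and legs: "Comp G P1 H = dl0 GP A \<and> Comp G P2 H = dl1 GP A"
  obtain f1 f2 where P1: "P1 = (X, A, f1)" and P2: "P2 = (X, A, f2)"
    and level_P: "\<And>i. i \<in> Obj I \<Longrightarrow> is_product (C i) (fst A i) (fst A i) (fst X i) (f1 i) (f2 i)"
    using Gamma_product_level[OF level_products_exist[OF _ A A] P] by blast
  obtain h where Hh: "H = (gP_obj I S A, X, h)" and h: "(gP_obj I S A, X, h) \<in> Arr G"
    using Gamma_homE[OF H[unfolded Gamma_P_simps]] .
  have "h i \<in> Fib (S i)" if i: "i \<in> Obj I" for i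
    using Pcat_P2[OF level_Pcat[OF i]] Gamma_obj_level[OF A i] level_P[OF i] Gamma_arr_level[OF h i] i
      Gamma_Comp_level[OF legs[THEN conjunct1, unfolded P1 Hh Gamma_P_simps] i]
      Gamma_Comp_level[OF legs[THEN conjunct2, unfolded P2 Hh Gamma_P_simps] i]
    by simp
  thus "H \<in> Fib GP" using Hh h by (simp add: Gamma_P_simps)
qed

lemma level_pullback_data:
  assumes a: "(A, D, a) \<in> Arr G" and b: "(B, D, b) \<in> Fib GP" and i: "i \<in> Obj I"
  shows "a i \<in> Arr (C i) \<and> b i \<in> Fib (S i) \<and> Cod (C i) (a i) = Cod (C i) (b i)"
  using Gamma_arr_level[OF a i] Gamma_arr_level[of B D b i] b i by (simp add: Gamma_P_simps in_hom_iff)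

lemma level_pullbacks_exist:
  "(A, D, a) \<in> Arr G \<Longrightarrow> (B, D, b) \<in> Fib GP \<Longrightarrow> i \<in> Obj I \<Longrightarrow>
    \<exists>Q q1 q2. is_pullback (C i) (a i) (b i) Q q1 q2"
  using Pcat_P3[OF level_Pcat] level_pullback_data by blast

lemma Gamma_P3: "\<forall>u v. u \<in> Arr G \<and> v \<in> Fib GP \<and> Cod G u = Cod G v \<longrightarrow>
    (\<exists>Q q1 q2. is_pullback G u v Q q1 q2) \<and>
    (\<forall>Q q1 q2. is_pullback G u v Q q1 q2 \<longrightarrow>
       q1 \<in> Fib GP \<and> (v \<in> WE GP \<longrightarrow> q1 \<in> WE GP) \<and> (u \<in> WE GP \<longrightarrow> q2 \<in> WE GP))"
proof (intro allI impI conjI)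
  fix U V assume UV: "U \<in> Arr G \<and> V \<in> Fib GP \<and> Cod G U = Cod G V"
  obtain A D a where Ua: "U = (A, D, a)" by (cases U)
  obtain B b where Vb: "V = (B, D, b)" using UV Ua by (cases V) simp
  have a: "(A, D, a) \<in> Arr G" and bF: "(B, D, b) \<in> Fib GP" using UV Ua Vb by simp_all
  hence b: "(B, D, b) \<in> Arr G" by (simp add: Gamma_P_simps)
  note ex = level_pullbacks_exist[OF a bF]
  show "\<exists>Q q1 q2. is_pullback G U V Q q1 q2" using Gamma_pullback_exists[OF a b ex] Ua Vb by simp
  fix Q Q1 Q2 assume "is_pullback G U V Q Q1 Q2"
  hence pb: "is_pullback G (A, D, a) (B, D, b) Q Q1 Q2" using Ua Vb by simp
  obtain f1 f2 where Q1: "Q1 = (Q, A, f1)" and Q2: "Q2 = (Q, B, f2)"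
    and f1: "(Q, A, f1) \<in> Arr G" and f2: "(Q, B, f2) \<in> Arr G"
    and level: "\<And>i. i \<in> Obj I \<Longrightarrow> is_pullback (C i) (a i) (b i) (fst Q i) (f1 i) (f2 i)"
    using Gamma_pullback_level[OF a b ex pb] by blast
  have "f1 i \<in> Fib (S i) \<and> (b i \<in> WE (S i) \<longrightarrow> f1 i \<in> WE (S i)) \<and> (a i \<in> WE (S i) \<longrightarrow> f2 i \<in> WE (S i))"
    if i: "i \<in> Obj I" for i
    using Pcat_P3[OF level_Pcat[OF i]] level_pullback_data[OF a bF i] level[OF i] by blast
  thus "Q1 \<in> Fib GP" "V \<in> WE GP \<Longrightarrow> Q1 \<in> WE GP" "U \<in> WE GP \<Longrightarrow> Q2 \<in> WE GP"
    using Q1 Q2 f1 f2 Ua Vb by (simp_all add: Gamma_P_simps)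
qed

lemma Gamma_P4_fib: "\<forall>f\<in>Fib GP. PM GP f \<in> Fib GP"
  and Gamma_P4_we: "\<forall>f\<in>WE GP. PM GP f \<in> WE GP"
  using levelwise_endofunctor.arr_in_Gamma[OF levelwise_endofunctor_P]
    Pcat_P4_fib[OF level_Pcat] Pcat_P4_we[OF level_Pcat]
  by (auto simp: Gamma_P_simps levelwise_class_def)

lemma Gamma_P4_pullback: "\<forall>u v Q q1 q2. v \<in> Fib GP \<and> is_pullback G u v Q q1 q2 \<longrightarrow>
    is_pullback G (PM GP u) (PM GP v) (PO GP Q) (PM GP q1) (PM GP q2)"
proof (intro allI impI)
  fix U V Q Q1 Q2 assume H: "V \<in> Fib GP \<and> is_pullback G U V Q Q1 Q2"
  obtain A D a where Ua: "U = (A, D, a)" by (cases U)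
  obtain B b where Vb: "V = (B, D, b)" using H Ua by (cases V) (simp add: is_pullback_def)
  have a: "(A, D, a) \<in> Arr G" and bF: "(B, D, b) \<in> Fib GP" using H Ua Vb by (simp_all add: is_pullback_def)
  hence b: "(B, D, b) \<in> Arr G" by (simp add: Gamma_P_simps)
  have pb: "is_pullback G (A, D, a) (B, D, b) Q Q1 Q2" using H Ua Vb by simp
  obtain f1 f2 where Q1: "Q1 = (Q, A, f1)" and Q2: "Q2 = (Q, B, f2)"
    and f1: "(Q, A, f1) \<in> Arr G" and f2: "(Q, B, f2) \<in> Arr G"
    and level: "\<And>i. i \<in> Obj I \<Longrightarrow> is_pullback (C i) (a i) (b i) (fst Q i) (f1 i) (f2 i)"
    using Gamma_pullback_level[OF a b level_pullbacks_exist[OF a bF] pb] by blast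
  note P = levelwise_endofunctor.arr_in_Gamma[OF levelwise_endofunctor_P]
  have level_P: "is_pullback (C i) (PM (S i) (a i)) (PM (S i) (b i)) (PO (S i) (fst Q i))
      (PM (S i) (f1 i)) (PM (S i) (f2 i))" if i: "i \<in> Obj I" for i
    using Pcat_P4_pullback[OF level_Pcat[OF i]] level_pullback_data[OF a bF i] level[OF i] by blast
  have "is_pullback G (PO GP A, PO GP D, lw (Obj I) (\<lambda>i. PM (S i) (a i)))
      (PO GP B, PO GP D, lw (Obj I) (\<lambda>i. PM (S i) (b i))) (PO GP Q)
      (PO GP Q, PO GP A, lw (Obj I) (\<lambda>i. PM (S i) (f1 i))) (PO GP Q, PO GP B, lw (Obj I) (\<lambda>i. PM (S i) (f2 i)))"
    by (rule Gamma_pullback_of_levelwise[OF P[OF a] P[OF b] _ P[OF f1] P[OF f2]])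
      (use level_P in \<open>auto simp: Gamma_P_simps\<close>)
  thus "is_pullback G (PM GP U) (PM GP V) (PO GP Q) (PM GP Q1) (PM GP Q2)"
    using Ua Vb Q1 Q2 by (simp add: Gamma_P_simps)
qed

lemma Gamma_P5: "\<forall>v\<in>Fib GP. \<forall>AA a1 a2 BB b1 b2 w h Q q1 q2 k.
    is_product G (Dom G v) (Dom G v) AA a1 a2 \<and>
    is_product G (Cod G v) (Cod G v) BB b1 b2 \<and>
    w \<in> hom G AA BB \<and> Comp G b1 w = Comp G v a1 \<and> Comp G b2 w = Comp G v a2 \<and>
    h \<in> hom G (PO GP (Cod G v)) BB \<and> Comp G b1 h = dl0 GP (Cod G v) \<and>
    Comp G b2 h = dl1 GP (Cod G v) \<and>
    is_pullback G w h Q q1 q2 \<and>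
    k \<in> hom G (PO GP (Dom G v)) Q \<and>
    Comp G a1 (Comp G q1 k) = dl0 GP (Dom G v) \<and> Comp G a2 (Comp G q1 k) = dl1 GP (Dom G v) \<and>
    Comp G q2 k = PM GP v
    \<longrightarrow> k \<in> Fib GP"
proof (intro ballI allI impI)
  fix V AA A1 A2 BB B1 B2 W H Q Q1 Q2 K
  assume VF: "V \<in> Fib GP"
  assume hyps: "is_product G (Dom G V) (Dom G V) AA A1 A2 \<and>
    is_product G (Cod G V) (Cod G V) BB B1 B2 \<and>
    W \<in> hom G AA BB \<and> Comp G B1 W = Comp G V A1 \<and> Comp G B2 W = Comp G V A2 \<and>
    H \<in> hom G (PO GP (Cod G V)) BB \<and> Comp G B1 H = dl0 GP (Cod G V) \<and>
    Comp G B2 H = dl1 GP (Cod G V) \<and>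
    is_pullback G W H Q Q1 Q2 \<and>
    K \<in> hom G (PO GP (Dom G V)) Q \<and>
    Comp G A1 (Comp G Q1 K) = dl0 GP (Dom G V) \<and> Comp G A2 (Comp G Q1 K) = dl1 GP (Dom G V) \<and>
    Comp G Q2 K = PM GP V"
  obtain A B v where Vv: "V = (A, B, v)" by (cases V)
  have vF: "(A, B, v) \<in> Fib GP" using VF Vv by simp
  hence v: "(A, B, v) \<in> Arr G" by (simp add: Gamma_P_simps)
  have A: "A \<in> Obj G" and B: "B \<in> Obj G" using Gamma_arr_dom[OF v] Gamma_arr_cod[OF v] .
  obtain fa1 fa2 where A1: "A1 = (AA, A, fa1)" and A2: "A2 = (AA, A, fa2)"
    and prod_A: "\<And>i. i \<in> Obj I \<Longrightarrow> is_product (C i) (fst A i) (fst A i) (fst AA i) (fa1 i) (fa2 i)"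
    using Gamma_product_level[OF level_products_exist[OF _ A A]] hyps Vv by (metis Gamma_Dom)
  obtain fb1 fb2 where B1: "B1 = (BB, B, fb1)" and B2: "B2 = (BB, B, fb2)"
    and prod_B: "\<And>i. i \<in> Obj I \<Longrightarrow> is_product (C i) (fst B i) (fst B i) (fst BB i) (fb1 i) (fb2 i)"
    using Gamma_product_level[OF level_products_exist[OF _ B B]] hyps Vv by (metis Gamma_Cod)
  obtain w where Ww: "W = (AA, BB, w)" and w: "(AA, BB, w) \<in> Arr G"
    using Gamma_homE hyps by blast
  obtain h where Hh: "H = (gP_obj I S B, BB, h)" and h: "(gP_obj I S B, BB, h) \<in> Arr G"
    using Gamma_homE hyps Vv by (metis Gamma_Cod Gamma_P_simps(1))
  obtain k where Kk: "K = (gP_obj I S A, Q, k)" and k: "(gP_obj I S A, Q, k) \<in> Arr G"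
    using Gamma_homE hyps Vv by (metis Gamma_Dom Gamma_P_simps(1))
  have hF: "(gP_obj I S B, BB, h) \<in> Fib GP"
    using Gamma_P2 B hyps Vv Hh by (metis Gamma_Cod Gamma_P_simps(1))
  have "is_pullback G (AA, BB, w) (gP_obj I S B, BB, h) Q Q1 Q2" using hyps Ww Hh by simp
  then obtain g1 g2 where Q1: "Q1 = (Q, AA, g1)" and Q2: "Q2 = (Q, gP_obj I S B, g2)"
    and pb: "\<And>i. i \<in> Obj I \<Longrightarrow> is_pullback (C i) (w i) (h i) (fst Q i) (g1 i) (g2 i)"
    using Gamma_pullback_level[OF w h level_pullbacks_exist[OF w hF]] by blast
  have "k i \<in> Fib (S i)" if i: "i \<in> Obj I" for i
  proof -
    have dv: "Dom (C i) (v i) = fst A i" and cv: "Cod (C i) (v i) = fst B i"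
      using Gamma_arr_level[OF v i] by (simp_all add: in_hom_iff)
    have vi: "v i \<in> Fib (S i)" using vF i by (simp add: Gamma_P_simps)
    show ?thesis
    proof (rule Pcat_P5[OF level_Pcat[OF i], rule_format, OF vi], unfold dv cv, intro conjI)
      show "is_product (C i) (fst A i) (fst A i) (fst AA i) (fa1 i) (fa2 i)" using prod_A[OF i] .
      show "is_product (C i) (fst B i) (fst B i) (fst BB i) (fb1 i) (fb2 i)" using prod_B[OF i] .
      show "w i \<in> hom (C i) (fst AA i) (fst BB i)" using Gamma_arr_level[OF w i] .
      show "Comp (C i) (fb1 i) (w i) = Comp (C i) (v i) (fa1 i)"
        "Comp (C i) (fb2 i) (w i) = Comp (C i) (v i) (fa2 i)"
        using hyps Vv A1 A2 B1 B2 Ww i by (auto dest: lw_eqD)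
      show "h i \<in> hom (C i) (PO (S i) (fst B i)) (fst BB i)" using Gamma_arr_level[OF h i] i by simp
      show "Comp (C i) (fb1 i) (h i) = dl0 (S i) (fst B i)" "Comp (C i) (fb2 i) (h i) = dl1 (S i) (fst B i)"
        using hyps Vv B1 B2 Hh i by (auto simp: Gamma_P_simps dest: lw_eqD)
      show "is_pullback (C i) (w i) (h i) (fst Q i) (g1 i) (g2 i)" using pb[OF i] .
      show "k i \<in> hom (C i) (PO (S i) (fst A i)) (fst Q i)" using Gamma_arr_level[OF k i] i by simp
      show "Comp (C i) (fa1 i) (Comp (C i) (g1 i) (k i)) = dl0 (S i) (fst A i)"
        "Comp (C i) (fa2 i) (Comp (C i) (g1 i) (k i)) = dl1 (S i) (fst A i)"
        "Comp (C i) (g2 i) (k i) = PM (S i) (v i)"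
        using hyps Vv A1 A2 Q1 Q2 Kk i by (auto simp: Gamma_P_simps dest: lw_eqD)
    qed
  qed
  thus "K \<in> Fib GP" using Kk k by (simp add: Gamma_P_simps)
qed

lemma Gamma_is_Pcat: "is_Pcat G GP"
  unfolding is_Pcat_def Let_def
  using Gamma_category Gamma_finite_products Gamma_path_functor
    Gamma_iota_nat Gamma_dl0_nat Gamma_dl1_nat Gamma_iota_eqs Gamma_tau_nat Gamma_tau_eqs
    Gamma_cc_nat Gamma_cc_eqs Gamma_mu_nat Gamma_mu_eqs Gamma_nabla_nat Gamma_nabla_eqs
    Gamma_fib_arr Gamma_we_arr Gamma_iso Gamma_fib_comp Gamma_we_comp Gamma_we_2_of_3
    Gamma_terminal_fib Gamma_P2 Gamma_P3 Gamma_P4_fib Gamma_P4_we Gamma_P4_pullback Gamma_P5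
  by (intro conjI) assumption+

end

theorem proposition4p6:
  fixes I :: "('i,'u) cat"
    and deg :: "'i \<Rightarrow> nat"
    and C :: "'i \<Rightarrow> ('o,'m) cat"
    and Fo :: "'u \<Rightarrow> 'o \<Rightarrow> 'o"
    and Fm :: "'u \<Rightarrow> 'm \<Rightarrow> 'm"
    and S :: "'i \<Rightarrow> ('o,'m) pstruct"
  assumes I_cat: "is_category I"
    and I_fin: "finite (Obj I)" "finite (Arr I)"
    and deg_range: "\<forall>i\<in>Obj I. deg i \<in> {0, 1}"
    and deg_mono: "\<forall>u\<in>Arr I. u \<noteq> Idm I (Dom I u) \<longrightarrow> deg (Dom I u) < deg (Cod I u)"
    and C_functor: "\<forall>u\<in>Arr I. is_functor (C (Dom I u)) (C (Cod I u)) (Fo u) (Fm u)"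
    and C_id: "\<forall>i\<in>Obj I. (\<forall>A\<in>Obj (C i). Fo (Idm I i) A = A) \<and> (\<forall>f\<in>Arr (C i). Fm (Idm I i) f = f)"
    and C_comp: "\<forall>u v. u \<in> Arr I \<and> v \<in> Arr I \<and> Cod I u = Dom I v \<longrightarrow>
                   (\<forall>A\<in>Obj (C (Dom I u)). Fo (Comp I v u) A = Fo v (Fo u A)) \<and>
                   (\<forall>f\<in>Arr (C (Dom I u)). Fm (Comp I v u) f = Fm v (Fm u f))"
    and C_Pcat: "\<forall>i\<in>Obj I. is_Pcat (C i) (S i)"
    and u_paths: "\<forall>u\<in>Arr I. preserves_paths (C (Dom I u)) (S (Dom I u)) (S (Cod I u)) (Fo u) (Fm u)"
    and u_fib_we: "\<forall>u\<in>Arr I. preserves_fib_we (S (Dom I u)) (S (Cod I u)) (Fm u)"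
    and u_fibprod: "\<forall>u\<in>Arr I. preserves_fibre_products (C (Dom I u)) (S (Dom I u)) (C (Cod I u)) (Fo u) (Fm u)"
  shows "is_Pcat (Gamma I C Fo Fm) (Gamma_P I C Fo Fm S)"
proof -
  interpret Gamma_Pcat I C Fo Fm S
    by unfold_locales (use I_cat C_functor C_Pcat u_paths Pcat_category in blast)+
  show ?thesis by (rule Gamma_is_Pcat)
qed

end
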